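(* Let $C\subset\mathbb{R}^n$ be a closed convex pointed cone and let $\mathcal{A}$ and $\mathcal{B}$ be two nonempty compact subsets of the same part of $\operatorname{End}(\operatorname{Int}C)$. Then for every $h>0$ there exist finite subsets $\mathcal{A}_f\subset\mathcal{A}$ and $\mathcal{B}_f\subset\mathcal{B}$ such that $|\rho(\mathcal{A},\mathcal{B})-\rho(\mathcal{A}_f,\mathcal{B}_f)|\le h$.
   Context: For $x,y\in\mathbb{R}^n$, $x\le_C y$ means $y-x\in C$. On $\operatorname{Int}C$ the Funk hemi-metric is $\operatorname{Funk}(x,y)=\log\inf\{\lambda>0: x\le_C\lambda y\}$. $\operatorname{End}(\operatorname{Int}C)$ is the set of linear maps (real $n\times n$ matrices acting on row vectors by $x\mapsto xA$) with $(\operatorname{Int}C)A\subset\operatorname{Int}C$, ordered by $A\le A'$ iff $xA\le_C xA'$ for all $x\in\operatorname{Int}C$. A part of $\operatorname{End}(\operatorname{Int}C)$ is an equivalence class for comparability ($A,A'$ comparable iff $\mu A\le A'\le\lambda A$ for some $\mu,\lambda>0$); on a part compactness refers to the Thompson metric $d_T(A,A')=\max(\operatorname{Funk}(A,A'),\operatorname{Funk}(A',A))$ with $\operatorname{Funk}(A,A')=\log\inf\{\lambda>0:A\le\lambda A'\}$. For nonempty compact $\mathcal{A},\mathcal{B}$ in a part, $\rho(\mathcal{A},\mathcal{B})$ is the value of the escape rate game on $\operatorname{Int}C$: starting from $x_0\in\operatorname{Int}C$, at each turn $k\ge1$ Min chooses $A_k\in\mathcal{A}$, then Max, after observing it, chooses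 $B_k\in\mathcal{B}$, and $x_k=x_{k-1}A_kB_k$. Strategies map finite histories to actions; payoff $J(\sigma,\tau)=\limsup_k\frac1k\operatorname{Funk}(x_k,x_0)$, minimized by Min and maximized by Max. The value is the $\lambda$ such that for every $\epsilon>0$ there exist strategies $\sigma^*,\tau^*$ with $J(\sigma^*,\tau)\le\lambda+\epsilon$ and $J(\sigma,\tau^* )\ge\lambda-\epsilon$ for all $\sigma,\tau$. *)

theory Defs
  imports "HOL-Analysis.Analysis" "HOL-Library.Extended_Real"
begin

type_synonym 'n mat = "real ^ 'n ^ 'n"

definition cone_le :: "(real ^ 'n) set \<Rightarrow> real ^ 'n \<Rightarrow> real ^ 'n \<Rightarrow> bool" where
  "cone_le C x y \<longleftrightarrow> y - x \<in> C"

definition pointed_cone :: "(real ^ 'n) set \<Rightarrow> bool" where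
  "pointed_cone C \<longleftrightarrow> cone C \<and> C \<inter> uminus ` C \<subseteq> {0}"

definition funk :: "(real ^ 'n) set \<Rightarrow> real ^ 'n \<Rightarrow> real ^ 'n \<Rightarrow> real" where
  "funk C x y = ln (Inf {l. l > 0 \<and> cone_le C x (l *\<^sub>R y)})"

text \<open>Linear maps act on row vectors: x \<mapsto> x A.\<close>
definition End_int :: "(real ^ 'n) set \<Rightarrow> 'n mat set" where
  "End_int C = {A. \<forall>x \<in> interior C. x v* A \<in> interior C}"

definition end_le :: "(real ^ 'n) set \<Rightarrow> 'n mat \<Rightarrow> 'n mat \<Rightarrow> bool" where
  "end_le C A A' \<longleftrightarrow> (\<forall>x \<in> interior C. cone_le C (x v* A) (x v* A'))"

definition comparable :: "(real ^ 'n) set \<Rightarrow> 'n mat \<Rightarrow> 'n mat \<Rightarrow> bool" where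
  "comparable C A A' \<longleftrightarrow>
     (\<exists>\<mu>>0. \<exists>c>0. end_le C (\<mu> *\<^sub>R A) A' \<and> end_le C A' (c *\<^sub>R A))"

definition in_same_part :: "(real ^ 'n) set \<Rightarrow> 'n mat set \<Rightarrow> bool" where
  "in_same_part C S \<longleftrightarrow> S \<subseteq> End_int C \<and> (\<forall>A\<in>S. \<forall>A'\<in>S. comparable C A A')"

definition funk_end :: "(real ^ 'n) set \<Rightarrow> 'n mat \<Rightarrow> 'n mat \<Rightarrow> real" where
  "funk_end C A A' = ln (Inf {l. l > 0 \<and> end_le C A (l *\<^sub>R A')})"

definition thompson :: "(real ^ 'n) set \<Rightarrow> 'n mat \<Rightarrow> 'n mat \<Rightarrow> real" where
  "thompson C A A' = max (funk_end C A A') (funk_end C A' A)"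

text \<open>Compactness w.r.t. the Thompson metric (sequential compactness, equivalent in metric spaces).\<close>
definition thompson_compact :: "(real ^ 'n) set \<Rightarrow> 'n mat set \<Rightarrow> bool" where
  "thompson_compact C S \<longleftrightarrow>
     (\<forall>f::nat \<Rightarrow> 'n mat. (\<forall>k. f k \<in> S) \<longrightarrow>
        (\<exists>l\<in>S. \<exists>r. strict_mono r \<and> (\<lambda>k. thompson C (f (r k)) l) \<longlonglongrightarrow> 0))"

text \<open>Histories: lists of (A_k, B_k). Min strategy: history \<Rightarrow> action;
  Max strategy: history \<Rightarrow> Min's current action \<Rightarrow> action.\<close>
type_synonym 'n min_strat = "('n mat \<times> 'n mat) list \<Rightarrow> 'n mat"
type_synonym 'n max_strat = "('n mat \<times> 'n mat) list \<Rightarrow> 'n mat \<Rightarrow> 'n mat"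

primrec hist :: "'n min_strat \<Rightarrow> 'n max_strat \<Rightarrow> nat \<Rightarrow> ('n mat \<times> 'n mat) list" where
  "hist \<sigma> \<tau> 0 = []"
| "hist \<sigma> \<tau> (Suc k) = hist \<sigma> \<tau> k @ [(\<sigma> (hist \<sigma> \<tau> k), \<tau> (hist \<sigma> \<tau> k) (\<sigma> (hist \<sigma> \<tau> k)))]"

primrec state :: "real ^ 'n \<Rightarrow> 'n min_strat \<Rightarrow> 'n max_strat \<Rightarrow> nat \<Rightarrow> real ^ 'n" where
  "state x0 \<sigma> \<tau> 0 = x0"
| "state x0 \<sigma> \<tau> (Suc k) =
     (state x0 \<sigma> \<tau> k v* \<sigma> (hist \<sigma> \<tau> k)) v* \<tau> (hist \<sigma> \<tau> k) (\<sigma> (hist \<sigma> \<tau> k))"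

definition payoff :: "(real ^ 'n) set \<Rightarrow> real ^ 'n \<Rightarrow> 'n min_strat \<Rightarrow> 'n max_strat \<Rightarrow> ereal" where
  "payoff C x0 \<sigma> \<tau> = limsup (\<lambda>k. ereal (funk C (state x0 \<sigma> \<tau> k) x0 / real k))"

definition is_min_strat :: "'n mat set \<Rightarrow> 'n min_strat \<Rightarrow> bool" where
  "is_min_strat A \<sigma> \<longleftrightarrow> (\<forall>h. \<sigma> h \<in> A)"

definition is_max_strat :: "'n mat set \<Rightarrow> 'n max_strat \<Rightarrow> bool" where
  "is_max_strat B \<tau> \<longleftrightarrow> (\<forall>h a. \<tau> h a \<in> B)"

definition is_game_value :: "(real ^ 'n) set \<Rightarrow> 'n mat set \<Rightarrow> 'n mat set \<Rightarrow> real ^ 'n \<Rightarrow> real \<Rightarrow> bool" where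
  "is_game_value C A B x0 v \<longleftrightarrow>
     (\<forall>\<epsilon>>0. \<exists>\<sigma>s \<tau>s. is_min_strat A \<sigma>s \<and> is_max_strat B \<tau>s \<and>
        (\<forall>\<tau>. is_max_strat B \<tau> \<longrightarrow> payoff C x0 \<sigma>s \<tau> \<le> ereal (v + \<epsilon>)) \<and>
        (\<forall>\<sigma>. is_min_strat A \<sigma> \<longrightarrow> payoff C x0 \<sigma> \<tau>s \<ge> ereal (v - \<epsilon>)))"

end

theory Submission
  imports Defs
begin

(*
  Let N be the gauge of the base point x0, i.e. N y = exp (funk C y x0), and let
  T g y = inf_A sup_B g (y A B) be the Shapley operator of the game.  The value of the game
  from x0 is rho = inf_k ln (T^k N x0) / k.  Min secures rho + eps by playing near-optimally
  for T^k in consecutive blocks of length k.  Max secures rho - eps by playing near-optimally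
  for T^L over the phases [m!, (m+1)!): each phase is m times longer than the whole past, so
  what happened before it is negligible.  Changing x0 changes T^k N only by a bounded factor,
  so rho does not depend on x0.
  Thompson compactness gives finite subsets Af, Bf such that every element of A (resp. B) is
  within a factor exp h of an element of Af (resp. Bf) in both directions.  Replacing A, B by
  Af, Bf then changes T by a factor at most exp h, and hence rho by at most h.
*)

section \<open>The cone order and the gauge\<close>

lemma continuous_on_vector_matrix_mult: "continuous_on S (\<lambda>x::real^'n. x v* (A::real^'m^'n))"
proof -
  have "(\<lambda>x::real^'n. x v* A) = (\<lambda>x. transpose A *v x)" by simp
  then show ?thesis by (metis linear_continuous_on matrix_vector_mul_bounded_linear)
qed

definition gauge :: "(real ^ 'n) set \<Rightarrow> real ^ 'n \<Rightarrow> real ^ 'n \<Rightarrow> real" where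
  "gauge C x0 y = Inf {l. l > 0 \<and> cone_le C y (l *\<^sub>R x0)}"

lemma funk_eq_ln_gauge: "funk C y x0 = ln (gauge C x0 y)"
  by (simp add: funk_def gauge_def)

locale proper_cone =
  fixes C :: "(real ^ 'n) set"
  assumes closed: "closed C" and convex: "convex C" and pointed: "pointed_cone C"
    and interior_nonempty: "interior C \<noteq> {}"
begin

lemma cone_add: "a \<in> C \<Longrightarrow> b \<in> C \<Longrightarrow> a + b \<in> C"
  using convex_cone[of C] convex pointed unfolding pointed_cone_def by blast

lemma cone_scaleR: "a \<in> C \<Longrightarrow> 0 \<le> t \<Longrightarrow> t *\<^sub>R a \<in> C"
  using pointed unfolding pointed_cone_def cone_def by blast

lemma zero_in_cone: "0 \<in> C"
  using interior_nonempty interior_subset cone_scaleR[of _ 0] by fastforce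

lemma cone_antisym: "a \<in> C \<Longrightarrow> -a \<in> C \<Longrightarrow> a = 0"
  using pointed unfolding pointed_cone_def by (metis IntI image_eqI minus_minus singletonD subsetD)

lemma zero_notin_interior: "0 \<notin> interior C"
proof
  assume "0 \<in> interior C"
  then obtain r where r: "r > 0" "ball 0 r \<subseteq> C" using mem_interior by blast
  have "ball (0::real^'n) r \<subseteq> {0}"
    using r cone_antisym by (auto simp: subset_iff)
  then have "0 \<in> interior {0::real^'n}" using r by (metis centre_in_ball interior_maximal open_ball subsetD)
  then show False by simp
qed

lemma cone_le_refl: "cone_le C x x"
  by (simp add: cone_le_def zero_in_cone)

lemma cone_le_trans: "cone_le C x y \<Longrightarrow> cone_le C y z \<Longrightarrow> cone_le C x z"
  unfolding cone_le_def using cone_add by (metis diff_add_cancel add_diff_eq)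

lemma cone_le_scaleR: "cone_le C x y \<Longrightarrow> 0 \<le> t \<Longrightarrow> cone_le C (t *\<^sub>R x) (t *\<^sub>R y)"
  unfolding cone_le_def using cone_scaleR by (metis scaleR_diff_right)

lemma scaleR_cone_le_scaleR_iff:
  assumes "x0 \<in> interior C"
  shows "cone_le C (s *\<^sub>R x0) (t *\<^sub>R x0) \<longleftrightarrow> s \<le> t"
proof
  assume le: "cone_le C (s *\<^sub>R x0) (t *\<^sub>R x0)"
  show "s \<le> t"
  proof (rule ccontr)
    assume "\<not> s \<le> t"
    then have "(s - t) *\<^sub>R x0 \<in> C" using cone_scaleR[of x0 "s - t"] assms interior_subset by auto
    moreover have "- ((s - t) *\<^sub>R x0) \<in> C" using le by (simp add: cone_le_def algebra_simps)
    ultimately have "(s - t) *\<^sub>R x0 = 0" by (rule cone_antisym)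
    then have "x0 = 0" using \<open>\<not> s \<le> t\<close> by simp
    then show False using assms zero_notin_interior by simp
  qed
next
  assume "s \<le> t"
  then show "cone_le C (s *\<^sub>R x0) (t *\<^sub>R x0)"
    using cone_scaleR[of x0 "t - s"] assms interior_subset by (auto simp: cone_le_def algebra_simps)
qed

lemma interior_absorbs:
  assumes "y \<in> interior C"
  obtains \<beta> where "\<beta> > 0" "cone_le C (\<beta> *\<^sub>R v) y"
proof -
  obtain r where r: "r > 0" "ball y r \<subseteq> C" using assms mem_interior by blast
  have d: "0 < 2 * norm v + 2" using norm_ge_zero[of v] by linarith
  define \<beta> where "\<beta> = r / (2 * norm v + 2)"
  have "\<beta> > 0" using r(1) d by (simp add: \<beta>_def)
  have "\<beta> * norm v \<le> \<beta> * (norm v + 1)" using \<open>\<beta> > 0\<close> by simp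
  also have "\<dots> = r / 2" using d by (simp add: \<beta>_def field_simps)
  also have "\<dots> < r" using r(1) by simp
  finally have "\<beta> * norm v < r" .
  then have "y - \<beta> *\<^sub>R v \<in> ball y r" using \<open>\<beta> > 0\<close> by (simp add: dist_norm)
  then have "y - \<beta> *\<^sub>R v \<in> C" using r(2) by blast
  then show ?thesis using that \<open>\<beta> > 0\<close> by (simp add: cone_le_def)
qed

lemma interior_scaleR: "y \<in> interior C \<Longrightarrow> t > 0 \<Longrightarrow> t *\<^sub>R y \<in> interior C"
proof -
  assume "y \<in> interior C" "t > 0"
  moreover obtain U where "open U" "y \<in> U" "U \<subseteq> C" using \<open>y \<in> interior C\<close> by (rule interiorE)
  ultimately show ?thesis
    using cone_scaleR by (intro interiorI[of "(*\<^sub>R) t ` U"]) (auto simp: open_scaling)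
qed

lemma End_int_maps_cone: "A \<in> End_int C \<Longrightarrow> y \<in> C \<Longrightarrow> y v* A \<in> C"
proof -
  assume A: "A \<in> End_int C" and y: "y \<in> C"
  have "closure (interior C) = C"
    using convex_closure_interior[OF convex interior_nonempty] closed closure_closed by simp
  moreover have "(\<lambda>x. x v* A) ` interior C \<subseteq> C"
    using A interior_subset unfolding End_int_def by blast
  ultimately show ?thesis
    using image_closure_subset[OF continuous_on_vector_matrix_mult closed] y by blast
qed

lemma End_int_mono: "A \<in> End_int C \<Longrightarrow> cone_le C y z \<Longrightarrow> cone_le C (y v* A) (z v* A)"
  unfolding cone_le_def by (metis End_int_maps_cone vector_matrix_mult_diff_distrib)

lemma End_int_interior: "A \<in> End_int C \<Longrightarrow> y \<in> interior C \<Longrightarrow> y v* A \<in> interior C"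
  unfolding End_int_def by blast

lemma interior_dominates:
  assumes "x0 \<in> interior C"
  obtains l where "l > 0" "cone_le C v (l *\<^sub>R x0)"
proof -
  obtain \<beta> where \<beta>: "\<beta> > 0" "cone_le C (\<beta> *\<^sub>R v) x0"
    using interior_absorbs[OF assms] .
  then have "cone_le C v ((1 / \<beta>) *\<^sub>R x0)"
    using cone_le_scaleR[OF \<beta>(2), of "1 / \<beta>"] by (simp add: cone_le_def algebra_simps)
  then show ?thesis using that[of "1 / \<beta>"] \<beta>(1) by simp
qed

lemma
  assumes x0: "x0 \<in> interior C" and y: "y \<in> interior C"
  shows gauge_pos: "gauge C x0 y > 0"
    and cone_le_gauge: "cone_le C y (gauge C x0 y *\<^sub>R x0)"
    and gauge_least: "\<And>l. l > 0 \<Longrightarrow> cone_le C y (l *\<^sub>R x0) \<Longrightarrow> gauge C x0 y \<le> l"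
proof -
  define S where "S = {l. l > 0 \<and> cone_le C y (l *\<^sub>R x0)}"
  have "S \<noteq> {}" using interior_dominates[OF x0, of y] by (auto simp: S_def)
  have bdd: "bdd_below S" unfolding S_def by (rule bdd_belowI[of _ 0]) auto
  have "closed ((\<lambda>l::real. l *\<^sub>R x0 - y) -` C \<inter> {0..})"
    by (intro closed_Int continuous_closed_vimage closed continuous_intros)
  moreover have "S \<subseteq> (\<lambda>l. l *\<^sub>R x0 - y) -` C \<inter> {0..}" by (auto simp: S_def cone_le_def)
  ultimately have "Inf S \<in> (\<lambda>l. l *\<^sub>R x0 - y) -` C \<inter> {0..}"
    using closure_contains_Inf[OF \<open>S \<noteq> {}\<close> bdd] closure_minimal by blast
  then have le: "cone_le C y (Inf S *\<^sub>R x0)" and "Inf S \<ge> 0" by (auto simp: cone_le_def)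
  moreover have "Inf S \<noteq> 0"
  proof
    assume "Inf S = 0"
    then have "y = 0" using le y interior_subset cone_antisym by (auto simp: cone_le_def)
    then show False using y zero_notin_interior by simp
  qed
  ultimately show "gauge C x0 y > 0" "cone_le C y (gauge C x0 y *\<^sub>R x0)"
    by (auto simp: gauge_def S_def[symmetric])
  show "\<And>l. l > 0 \<Longrightarrow> cone_le C y (l *\<^sub>R x0) \<Longrightarrow> gauge C x0 y \<le> l"
    unfolding gauge_def S_def[symmetric] using bdd by (auto intro: cInf_lower simp: S_def)
qed

lemma gauge_ge:
  "x0 \<in> interior C \<Longrightarrow> y \<in> interior C \<Longrightarrow> cone_le C (b *\<^sub>R x0) y \<Longrightarrow> b \<le> gauge C x0 y"
  using cone_le_gauge cone_le_trans scaleR_cone_le_scaleR_iff by meson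

lemma gauge_self: "x0 \<in> interior C \<Longrightarrow> gauge C x0 x0 = 1"
  using gauge_least[of x0 x0 1] gauge_ge[of x0 x0 1] cone_le_refl by fastforce

lemma gauge_mono:
  "x0 \<in> interior C \<Longrightarrow> y \<in> interior C \<Longrightarrow> z \<in> interior C \<Longrightarrow> cone_le C y z \<Longrightarrow>
    gauge C x0 y \<le> gauge C x0 z"
  using gauge_pos cone_le_gauge gauge_least cone_le_trans by meson

lemma gauge_homogeneous:
  assumes x0: "x0 \<in> interior C" and y: "y \<in> interior C" and t: "t > 0"
  shows "gauge C x0 (t *\<^sub>R y) = t * gauge C x0 y"
proof (rule antisym)
  have ty: "t *\<^sub>R y \<in> interior C" using y t by (rule interior_scaleR)
  have "cone_le C (t *\<^sub>R y) ((t * gauge C x0 y) *\<^sub>R x0)"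
    using cone_le_scaleR[OF cone_le_gauge[OF x0 y], of t] t by simp
  then show "gauge C x0 (t *\<^sub>R y) \<le> t * gauge C x0 y"
    using gauge_least[OF x0 ty] gauge_pos[OF x0 y] t by simp
  have "cone_le C y ((gauge C x0 (t *\<^sub>R y) / t) *\<^sub>R x0)"
    using cone_le_scaleR[OF cone_le_gauge[OF x0 ty], of "1/t"] t by simp
  then have "gauge C x0 y \<le> gauge C x0 (t *\<^sub>R y) / t"
    using gauge_least[OF x0 y] gauge_pos[OF x0 ty] t by simp
  then show "t * gauge C x0 y \<le> gauge C x0 (t *\<^sub>R y)" using t by (simp add: field_simps)
qed

lemma gauge_change_base:
  assumes x0: "x0 \<in> interior C" and x1: "x1 \<in> interior C" and y: "y \<in> interior C"
  shows "gauge C x1 y \<le> gauge C x1 x0 * gauge C x0 y"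
proof -
  have "cone_le C (gauge C x0 y *\<^sub>R x0) (gauge C x0 y *\<^sub>R (gauge C x1 x0 *\<^sub>R x1))"
    using cone_le_scaleR cone_le_gauge[OF x1 x0] gauge_pos[OF x0 y] by (meson less_imp_le)
  then have "cone_le C y ((gauge C x1 x0 * gauge C x0 y) *\<^sub>R x1)"
    using cone_le_trans[OF cone_le_gauge[OF x0 y]] by (simp add: mult.commute)
  then show ?thesis using gauge_least[OF x1 y] gauge_pos x0 x1 y by (meson mult_pos_pos)
qed

end

section \<open>Shapley operators\<close>

lemma cSUP_const_mult:
  fixes f :: "'a \<Rightarrow> real"
  assumes "X \<noteq> {}" "bdd_above (f ` X)" "t > 0"
  shows "(SUP x\<in>X. t * f x) = t * (SUP x\<in>X. f x)"
proof (rule antisym)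
  show "(SUP x\<in>X. t * f x) \<le> t * (SUP x\<in>X. f x)"
    using assms by (intro cSUP_least) (auto intro: mult_left_mono cSUP_upper)
  obtain M where "\<forall>x\<in>X. f x \<le> M" using assms(2) by (auto simp: bdd_above_def)
  then have "bdd_above ((\<lambda>x. t * f x) ` X)"
    using assms(3) by (intro bdd_aboveI2[of _ _ "t * M"]) simp
  then have "(SUP x\<in>X. f x) \<le> (SUP x\<in>X. t * f x) / t"
    using assms by (intro cSUP_least) (auto simp: field_simps intro: cSUP_upper[simplified])
  then show "t * (SUP x\<in>X. f x) \<le> (SUP x\<in>X. t * f x)" using assms by (simp add: field_simps)
qed

lemma cINF_const_mult:
  fixes f :: "'a \<Rightarrow> real"
  assumes "X \<noteq> {}" "bdd_below (f ` X)" "t > 0"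
  shows "(INF x\<in>X. t * f x) = t * (INF x\<in>X. f x)"
proof (rule antisym)
  show "t * (INF x\<in>X. f x) \<le> (INF x\<in>X. t * f x)"
    using assms by (intro cINF_greatest) (auto intro: mult_left_mono cINF_lower)
  obtain M where "\<forall>x\<in>X. M \<le> f x" using assms(2) by (auto simp: bdd_below_def)
  then have "bdd_below ((\<lambda>x. t * f x) ` X)"
    using assms(3) by (intro bdd_belowI2[of _ "t * M"]) simp
  then have "(INF x\<in>X. t * f x) / t \<le> (INF x\<in>X. f x)"
    using assms by (intro cINF_greatest) (auto simp: field_simps intro: cINF_lower[simplified])
  then show "(INF x\<in>X. t * f x) \<le> t * (INF x\<in>X. f x)" using assms by (simp add: field_simps)
qed

definition pos_mono_homogeneous :: "(real ^ 'n) set \<Rightarrow> (real ^ 'n \<Rightarrow> real) \<Rightarrow> bool" where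
  "pos_mono_homogeneous C g \<longleftrightarrow> (\<forall>y\<in>interior C. 0 < g y) \<and>
     (\<forall>y\<in>interior C. \<forall>z\<in>interior C. cone_le C y z \<longrightarrow> g y \<le> g z) \<and>
     (\<forall>y\<in>interior C. \<forall>t>0. g (t *\<^sub>R y) = t * g y)"

definition shapley :: "'n mat set \<Rightarrow> 'n mat set \<Rightarrow> (real ^ 'n \<Rightarrow> real) \<Rightarrow> real ^ 'n \<Rightarrow> real" where
  "shapley \<A> \<B> g y = (INF A\<in>\<A>. SUP B\<in>\<B>. g ((y v* A) v* B))"

definition iterated_gauge ::
    "(real ^ 'n) set \<Rightarrow> 'n mat set \<Rightarrow> 'n mat set \<Rightarrow> real ^ 'n \<Rightarrow> nat \<Rightarrow> real" where
  "iterated_gauge C \<A> \<B> x0 k = (shapley \<A> \<B> ^^ k) (gauge C x0) x0"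

text \<open>As \<open>iterated_gauge\<close> is submultiplicative (\<open>iterated_gauge_add_le\<close>), this infimum is
  also the limit of \<open>ln (iterated_gauge k) / k\<close> (Fekete's lemma).\<close>
definition escape_rate :: "(real ^ 'n) set \<Rightarrow> 'n mat set \<Rightarrow> 'n mat set \<Rightarrow> real ^ 'n \<Rightarrow> real" where
  "escape_rate C \<A> \<B> x0 = (INF k\<in>{1..}. ln (iterated_gauge C \<A> \<B> x0 k) / real k)"

context proper_cone
begin

lemma
  assumes "pos_mono_homogeneous C g"
  shows pos_mono_homogeneous_pos: "y \<in> interior C \<Longrightarrow> 0 < g y"
    and pos_mono_homogeneous_mono:
      "y \<in> interior C \<Longrightarrow> z \<in> interior C \<Longrightarrow> cone_le C y z \<Longrightarrow> g y \<le> g z"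
    and pos_mono_homogeneous_scaleR: "y \<in> interior C \<Longrightarrow> t > 0 \<Longrightarrow> g (t *\<^sub>R y) = t * g y"
  using assms by (simp_all add: pos_mono_homogeneous_def)

lemma pos_mono_homogeneous_gauge: "x0 \<in> interior C \<Longrightarrow> pos_mono_homogeneous C (gauge C x0)"
  unfolding pos_mono_homogeneous_def using gauge_pos gauge_mono gauge_homogeneous by blast

lemma pos_mono_homogeneous_const_mult:
  "pos_mono_homogeneous C g \<Longrightarrow> t > 0 \<Longrightarrow> pos_mono_homogeneous C (\<lambda>y. t * g y)"
  unfolding pos_mono_homogeneous_def by (auto intro: mult_left_mono)

end

locale escape_game = proper_cone +
  fixes x0 :: "real ^ 'n" and \<A> \<B> :: "'n mat set" and c K :: real
  assumes x0: "x0 \<in> interior C" and \<A>_nonempty: "\<A> \<noteq> {}" and \<B>_nonempty: "\<B> \<noteq> {}"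
    and \<A>_End: "\<A> \<subseteq> End_int C" and \<B>_End: "\<B> \<subseteq> End_int C"
    and c_pos: "c > 0" and K_pos: "K > 0"
    and turn_bounds: "\<And>A B. A \<in> \<A> \<Longrightarrow> B \<in> \<B> \<Longrightarrow>
       cone_le C (c *\<^sub>R x0) ((x0 v* A) v* B) \<and> cone_le C ((x0 v* A) v* B) (K *\<^sub>R x0)"
begin

abbreviation "T \<equiv> shapley \<A> \<B>"
abbreviation "N \<equiv> gauge C x0"
abbreviation "a \<equiv> iterated_gauge C \<A> \<B> x0"
abbreviation "\<rho> \<equiv> escape_rate C \<A> \<B> x0"

lemma turn_interior: "y \<in> interior C \<Longrightarrow> A \<in> \<A> \<Longrightarrow> B \<in> \<B> \<Longrightarrow> (y v* A) v* B \<in> interior C"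
  using End_int_interior \<A>_End \<B>_End by blast

lemma turn_mono:
  "cone_le C y z \<Longrightarrow> A \<in> \<A> \<Longrightarrow> B \<in> \<B> \<Longrightarrow> cone_le C ((y v* A) v* B) ((z v* A) v* B)"
  using End_int_mono \<A>_End \<B>_End by blast

lemma turn_scaleR: "((t *\<^sub>R y) v* A) v* B = t *\<^sub>R ((y v* A) v* (B::'n mat))"
  by (simp add: scaleR_vector_matrix_assoc)

lemma turn_upper:
  assumes y: "y \<in> interior C" and AB: "A \<in> \<A>" "B \<in> \<B>"
  shows "cone_le C ((y v* A) v* B) ((K * N y) *\<^sub>R x0)"
proof -
  have "cone_le C ((y v* A) v* B) (N y *\<^sub>R ((x0 v* A) v* B))"
    using turn_mono[OF cone_le_gauge[OF x0 y] AB] by (simp add: turn_scaleR)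
  moreover have "cone_le C (N y *\<^sub>R ((x0 v* A) v* B)) (N y *\<^sub>R (K *\<^sub>R x0))"
    using cone_le_scaleR turn_bounds[OF AB] gauge_pos[OF x0 y] by (meson less_imp_le)
  ultimately show ?thesis using cone_le_trans by (simp add: mult.commute)
qed

lemma turn_lower:
  assumes le: "cone_le C (b *\<^sub>R x0) y" and b: "b \<ge> 0" and AB: "A \<in> \<A>" "B \<in> \<B>"
  shows "cone_le C ((b * c) *\<^sub>R x0) ((y v* A) v* B)"
proof -
  have "cone_le C (b *\<^sub>R (c *\<^sub>R x0)) (b *\<^sub>R ((x0 v* A) v* B))"
    using cone_le_scaleR turn_bounds[OF AB] b by blast
  then show ?thesis using turn_mono[OF le AB] cone_le_trans by (simp add: turn_scaleR)
qed

lemma turn_gauge_le: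
  "y \<in> interior C \<Longrightarrow> A \<in> \<A> \<Longrightarrow> B \<in> \<B> \<Longrightarrow> N ((y v* A) v* B) \<le> K * N y"
  using gauge_least[OF x0 turn_interior] turn_upper K_pos gauge_pos[OF x0] by simp

context
  fixes g assumes g: "pos_mono_homogeneous C g"
begin

lemma turn_value_le:
  assumes y: "y \<in> interior C" and AB: "A \<in> \<A>" "B \<in> \<B>"
  shows "g ((y v* A) v* B) \<le> K * N y * g x0"
proof -
  have "g ((y v* A) v* B) \<le> g ((K * N y) *\<^sub>R x0)"
    using pos_mono_homogeneous_mono[OF g turn_interior[OF y AB] _ turn_upper[OF y AB]]
      interior_scaleR[OF x0] K_pos gauge_pos[OF x0 y] by simp
  also have "\<dots> = K * N y * g x0"
    using pos_mono_homogeneous_scaleR[OF g x0] K_pos gauge_pos[OF x0 y] by simp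
  finally show ?thesis .
qed

lemma turn_value_ge:
  assumes y: "y \<in> interior C" and AB: "A \<in> \<A>" "B \<in> \<B>"
    and b: "b > 0" "cone_le C (b *\<^sub>R x0) y"
  shows "b * c * g x0 \<le> g ((y v* A) v* B)"
proof -
  have "g ((b * c) *\<^sub>R x0) \<le> g ((y v* A) v* B)"
    using pos_mono_homogeneous_mono[OF g _ turn_interior[OF y AB] turn_lower[OF b(2) _ AB]]
      interior_scaleR[OF x0] b c_pos by simp
  moreover have "g ((b * c) *\<^sub>R x0) = b * c * g x0"
    using pos_mono_homogeneous_scaleR[OF g x0] b c_pos by simp
  ultimately show ?thesis by simp
qed

lemma bdd_above_Max_values:
  "y \<in> interior C \<Longrightarrow> A \<in> \<A> \<Longrightarrow> bdd_above ((\<lambda>B. g ((y v* A) v* B)) ` \<B>)"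
  using turn_value_le by (intro bdd_aboveI2) blast

lemma Max_value_ge:
  assumes y: "y \<in> interior C" and A: "A \<in> \<A>" and b: "b > 0" "cone_le C (b *\<^sub>R x0) y"
  shows "b * c * g x0 \<le> (SUP B\<in>\<B>. g ((y v* A) v* B))"
proof -
  obtain B where B: "B \<in> \<B>" using \<B>_nonempty by blast
  show ?thesis
    using turn_value_ge[OF y A B b] cSUP_upper[OF B bdd_above_Max_values[OF y A]] by linarith
qed

lemma bdd_below_Min_values:
  assumes y: "y \<in> interior C"
  shows "bdd_below ((\<lambda>A. SUP B\<in>\<B>. g ((y v* A) v* B)) ` \<A>)"
proof -
  obtain b where "b > 0" "cone_le C (b *\<^sub>R x0) y" using interior_absorbs[OF y] .
  then show ?thesis using Max_value_ge[OF y] by (intro bdd_belowI2) blast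
qed

lemma shapley_ge:
  assumes y: "y \<in> interior C" and b: "b > 0" "cone_le C (b *\<^sub>R x0) y"
  shows "b * c * g x0 \<le> T g y"
  unfolding shapley_def using Max_value_ge[OF y _ b] \<A>_nonempty by (intro cINF_greatest) auto

lemma shapley_le_Max_value: "y \<in> interior C \<Longrightarrow> A \<in> \<A> \<Longrightarrow> T g y \<le> (SUP B\<in>\<B>. g ((y v* A) v* B))"
  unfolding shapley_def by (rule cINF_lower[OF bdd_below_Min_values])

lemma Max_value_le:
  "y \<in> interior C \<Longrightarrow> A \<in> \<A> \<Longrightarrow> B \<in> \<B> \<Longrightarrow> g ((y v* A) v* B) \<le> (SUP B\<in>\<B>. g ((y v* A) v* B))"
  by (rule cSUP_upper[OF _ bdd_above_Max_values])

lemma shapley_const_mult: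
  assumes t: "t > 0" and y: "y \<in> interior C"
  shows "T (\<lambda>z. t * g z) y = t * T g y"
proof -
  have "T (\<lambda>z. t * g z) y = (INF A\<in>\<A>. t * (SUP B\<in>\<B>. g ((y v* A) v* B)))"
    unfolding shapley_def using cSUP_const_mult[OF \<B>_nonempty bdd_above_Max_values[OF y] t]
    by (intro INF_cong) auto
  also have "\<dots> = t * T g y"
    unfolding shapley_def using cINF_const_mult[OF \<A>_nonempty bdd_below_Min_values[OF y] t] .
  finally show ?thesis .
qed

lemma pos_mono_homogeneous_shapley: "pos_mono_homogeneous C (T g)"
  unfolding pos_mono_homogeneous_def
proof (intro conjI ballI allI impI)
  fix y assume y: "y \<in> interior C"
  obtain b where b: "b > 0" "cone_le C (b *\<^sub>R x0) y" using interior_absorbs[OF y] .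
  have "0 < b * c * g x0" using b c_pos pos_mono_homogeneous_pos[OF g x0] by simp
  then show "0 < T g y" using shapley_ge[OF y b] by linarith
next
  fix y z assume y: "y \<in> interior C" and z: "z \<in> interior C" and le: "cone_le C y z"
  have "(SUP B\<in>\<B>. g ((y v* A) v* B)) \<le> (SUP B\<in>\<B>. g ((z v* A) v* B))" if A: "A \<in> \<A>" for A
    using \<B>_nonempty bdd_above_Max_values[OF z A]
      pos_mono_homogeneous_mono[OF g turn_interior[OF y A] turn_interior[OF z A] turn_mono[OF le A]]
    by (intro cSUP_mono) auto
  then show "T g y \<le> T g z"
    unfolding shapley_def by (intro cINF_mono[OF \<A>_nonempty bdd_below_Min_values[OF y]]) blast
next
  fix y and t :: real assume y: "y \<in> interior C" and t: "t > 0"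
  have "g (t *\<^sub>R ((y v* A) v* B)) = t * g ((y v* A) v* B)" if "A \<in> \<A>" "B \<in> \<B>" for A B
    using pos_mono_homogeneous_scaleR[OF g turn_interior[OF y that] t] .
  then have "T g (t *\<^sub>R y) = T (\<lambda>z. t * g z) y"
    unfolding shapley_def turn_scaleR by simp
  then show "T g (t *\<^sub>R y) = t * T g y" using shapley_const_mult[OF t y] by simp
qed

end

lemma shapley_mono:
  assumes g: "pos_mono_homogeneous C g" and g': "pos_mono_homogeneous C g'"
    and le: "\<And>y. y \<in> interior C \<Longrightarrow> g y \<le> g' y" and y: "y \<in> interior C"
  shows "T g y \<le> T g' y"
proof -
  have "(SUP B\<in>\<B>. g ((y v* A) v* B)) \<le> (SUP B\<in>\<B>. g' ((y v* A) v* B))" if A: "A \<in> \<A>" for A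
    using \<B>_nonempty bdd_above_Max_values[OF g' y A] le turn_interior[OF y A] by (intro cSUP_mono) auto
  then show ?thesis
    unfolding shapley_def by (intro cINF_mono[OF \<A>_nonempty bdd_below_Min_values[OF g y]]) blast
qed

lemma pos_mono_homogeneous_iterate:
  "pos_mono_homogeneous C g \<Longrightarrow> pos_mono_homogeneous C ((T ^^ k) g)"
  by (induction k) (auto simp: pos_mono_homogeneous_shapley)

lemma iterate_le_const_mult:
  assumes g: "pos_mono_homogeneous C g" and g': "pos_mono_homogeneous C g'" and t: "t > 0"
    and le: "\<And>y. y \<in> interior C \<Longrightarrow> g y \<le> t * g' y"
  shows "y \<in> interior C \<Longrightarrow> (T ^^ k) g y \<le> t * (T ^^ k) g' y"
proof (induction k arbitrary: y)
  case (Suc k)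
  have "(T ^^ Suc k) g y \<le> T (\<lambda>z. t * (T ^^ k) g' z) y"
    using shapley_mono[OF pos_mono_homogeneous_iterate[OF g]
        pos_mono_homogeneous_const_mult[OF pos_mono_homogeneous_iterate[OF g'] t] Suc.IH Suc.prems]
    by simp
  also have "\<dots> = t * (T ^^ Suc k) g' y"
    using shapley_const_mult[OF pos_mono_homogeneous_iterate[OF g'] t Suc.prems] by simp
  finally show ?case .
qed (use le in simp)

lemma pos_mono_homogeneous_iterate_gauge: "pos_mono_homogeneous C ((T ^^ k) N)"
  using pos_mono_homogeneous_iterate[OF pos_mono_homogeneous_gauge[OF x0]] .

lemma iterated_gauge_pos: "a k > 0"
  unfolding iterated_gauge_def using pos_mono_homogeneous_pos[OF pos_mono_homogeneous_iterate_gauge x0] .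

lemma iterate_gauge_le: "y \<in> interior C \<Longrightarrow> (T ^^ k) N y \<le> N y * a k"
  using pos_mono_homogeneous_mono[OF pos_mono_homogeneous_iterate_gauge _
      interior_scaleR[OF x0 gauge_pos[OF x0]] cone_le_gauge[OF x0]]
    pos_mono_homogeneous_scaleR[OF pos_mono_homogeneous_iterate_gauge x0 gauge_pos[OF x0]]
  by (simp add: iterated_gauge_def)

lemma iterate_gauge_ge:
  "y \<in> interior C \<Longrightarrow> b > 0 \<Longrightarrow> cone_le C (b *\<^sub>R x0) y \<Longrightarrow> b * a k \<le> (T ^^ k) N y"
  using pos_mono_homogeneous_mono[OF pos_mono_homogeneous_iterate_gauge interior_scaleR[OF x0]]
    pos_mono_homogeneous_scaleR[OF pos_mono_homogeneous_iterate_gauge x0]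
  by (fastforce simp: iterated_gauge_def)

lemma iterated_gauge_0: "a 0 = 1"
  by (simp add: iterated_gauge_def gauge_self[OF x0])

lemma iterated_gauge_ge_power: "c ^ k \<le> a k"
proof (induction k)
  case (Suc k)
  have "c * a k \<le> a (Suc k)"
    using shapley_ge[OF pos_mono_homogeneous_iterate_gauge x0 zero_less_one, of k] cone_le_refl
    by (simp add: iterated_gauge_def)
  then show ?case using Suc c_pos by (simp add: order_trans[OF mult_left_mono])
qed (simp add: iterated_gauge_0)

lemma iterated_gauge_add_le: "a (j + k) \<le> a j * a k"
proof -
  have "(T ^^ j) ((T ^^ k) N) x0 \<le> a k * (T ^^ j) N x0"
    using iterate_le_const_mult[OF pos_mono_homogeneous_iterate_gauge pos_mono_homogeneous_gauge[OF x0]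
        iterated_gauge_pos _ x0] iterate_gauge_le by (simp add: mult.commute)
  then show ?thesis by (simp add: iterated_gauge_def funpow_add mult.commute)
qed

lemma iterated_gauge_mult_le: "a (j * k) \<le> a k ^ j"
proof (induction j)
  case (Suc j)
  have "a (Suc j * k) \<le> a k * a (j * k)" using iterated_gauge_add_le[of k "j * k"] by simp
  also have "\<dots> \<le> a k * a k ^ j" using Suc iterated_gauge_pos by (simp add: mult_left_mono less_imp_le)
  finally show ?case by simp
qed (simp add: iterated_gauge_0)

lemma bdd_below_escape_rate: "bdd_below ((\<lambda>k. ln (a k) / real k) ` {1..})"
proof (rule bdd_belowI2[of _ "ln c"])
  fix k :: nat assume "k \<in> {1..}"
  have "real k * ln c = ln (c ^ k)" using c_pos by (simp add: ln_realpow)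
  also have "\<dots> \<le> ln (a k)" using iterated_gauge_ge_power[of k] c_pos iterated_gauge_pos by simp
  finally show "ln c \<le> ln (a k) / real k" using \<open>k \<in> {1..}\<close> by (simp add: field_simps)
qed

lemma escape_rate_le: "k \<ge> 1 \<Longrightarrow> \<rho> \<le> ln (a k) / real k"
  unfolding escape_rate_def using bdd_below_escape_rate by (intro cINF_lower) auto

lemma exp_escape_rate_le: "k \<ge> 1 \<Longrightarrow> exp (\<rho> * real k) \<le> a k"
  using escape_rate_le[of k] iterated_gauge_pos[of k]
  by (simp add: field_simps) (metis exp_le_cancel_iff exp_ln)

lemma escape_rate_less: "r > \<rho> \<Longrightarrow> \<exists>k\<ge>1. ln (a k) / real k < r"
  unfolding escape_rate_def using cINF_less_iff[OF _ bdd_below_escape_rate] by auto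

end

section \<open>Values of the escape rate game\<close>

lemma limsup_ge_of_subseq:
  assumes "strict_mono r" "\<forall>\<^sub>F m in sequentially. l m \<le> X (r m)" "l \<longlonglongrightarrow> L"
  shows "ereal L \<le> limsup (\<lambda>t. ereal (X t))"
proof -
  have "ereal L = limsup (\<lambda>m. ereal (l m))"
    using assms(3) by (intro lim_imp_Limsup[symmetric]) simp_all
  also have "\<dots> \<le> limsup ((\<lambda>t. ereal (X t)) \<circ> r)"
    using assms(2) by (intro Limsup_mono) (simp add: eventually_mono)
  also have "\<dots> \<le> limsup (\<lambda>t. ereal (X t))" using assms(1) by (rule limsup_subseq_mono)
  finally show ?thesis .
qed

lemma limsup_ln_div_le_of_block_bound:
  fixes u :: "nat \<Rightarrow> real"
  assumes k: "k \<ge> 1" and P: "P > 0" and M: "M > 0"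
    and u: "\<And>t. 0 < u t" "\<And>t. u t \<le> M * P ^ (t div k)"
  shows "limsup (\<lambda>t. ereal (ln (u t) / real t)) \<le> ereal (ln P / real k)"
proof -
  define D where "D = \<bar>ln M\<bar> + \<bar>ln P\<bar>"
  have bound: "ln (u t) / real t \<le> ln P / real k + D / real t" if t: "t \<ge> 1" for t
  proof -
    have "real t = real (t div k) * real k + real (t mod k)"
      by (metis of_nat_add of_nat_mult div_mult_mod_eq)
    moreover have "real (t mod k) < real k" using k by simp
    ultimately have "real (t div k) \<le> real t / real k" "real t / real k - 1 \<le> real (t div k)"
      using k by (simp_all add: field_simps)
    then have "real (t div k) * ln P \<le> real t / real k * ln P + \<bar>ln P\<bar>"
      by (cases "ln P \<ge> 0") (auto simp: algebra_simps dest: mult_right_mono mult_right_mono_neg[of _ _ "ln P"])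
    moreover have "ln (u t) \<le> ln (M * P ^ (t div k))"
      using u[of t] by (subst ln_le_cancel_iff) (auto simp: M P)
    moreover have "ln (M * P ^ (t div k)) = ln M + real (t div k) * ln P"
      using M P by (simp add: ln_mult_pos ln_realpow)
    ultimately have "ln (u t) \<le> real t * (ln P / real k) + D" by (simp add: D_def)
    then show ?thesis using t by (simp add: field_simps)
  qed
  have "limsup (\<lambda>t. ereal (ln (u t) / real t)) \<le> limsup (\<lambda>t. ereal (ln P / real k + D / real t))"
    using bound by (intro Limsup_mono) (auto simp: eventually_sequentially)
  also have "\<dots> = ereal (ln P / real k)"
  proof (intro lim_imp_Limsup)
    have "(\<lambda>t. ln P / real k + D / real t) \<longlonglongrightarrow> ln P / real k"
      using tendsto_add[OF tendsto_const[of "ln P / real k"] lim_const_over_n[of D]] by simp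
    then show "(\<lambda>t. ereal (ln P / real k + D / real t)) \<longlonglongrightarrow> ereal (ln P / real k)"
      by simp
  qed simp
  finally show ?thesis .
qed

definition play_from :: "real ^ 'n \<Rightarrow> ('n mat \<times> 'n mat) list \<Rightarrow> real ^ 'n" where
  "play_from x0 h = foldl (\<lambda>x (A, B). (x v* A) v* B) x0 h"

lemma length_hist [simp]: "length (hist \<sigma> \<tau> k) = k"
  by (induction k) auto

lemma state_eq_play_from: "state x0 \<sigma> \<tau> k = play_from x0 (hist \<sigma> \<tau> k)"
  by (induction k) (simp_all add: play_from_def)

definition markov_min :: "real ^ 'n \<Rightarrow> (nat \<Rightarrow> real ^ 'n \<Rightarrow> 'n mat) \<Rightarrow> 'n min_strat" where
  "markov_min x0 f h = f (length h) (play_from x0 h)"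

definition markov_max :: "real ^ 'n \<Rightarrow> (nat \<Rightarrow> real ^ 'n \<Rightarrow> 'n mat \<Rightarrow> 'n mat) \<Rightarrow> 'n max_strat" where
  "markov_max x0 f h A = f (length h) (play_from x0 h) A"

lemma markov_min_hist: "markov_min x0 f (hist \<sigma> \<tau> t) = f t (state x0 \<sigma> \<tau> t)"
  by (simp add: markov_min_def state_eq_play_from)

lemma markov_max_hist: "markov_max x0 f (hist \<sigma> \<tau> t) A = f t (state x0 \<sigma> \<tau> t) A"
  by (simp add: markov_max_def state_eq_play_from)

definition next_fact :: "nat \<Rightarrow> nat" where
  "next_fact t = fact (LEAST i. t < fact i)"

lemma less_next_fact: "t < next_fact t"
proof -
  have "t < fact (Suc t)" using fact_ge_self[of "Suc t"] by simp
  then show ?thesis unfolding next_fact_def by (rule LeastI)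
qed

lemma next_fact_eq:
  assumes "fact m \<le> t" "t < fact (Suc m)"
  shows "next_fact t = fact (Suc m)"
proof -
  have "Suc m \<le> i" if "t < fact i" for i
  proof (rule ccontr)
    assume "\<not> Suc m \<le> i"
    then have "fact i \<le> (fact m :: nat)" by (intro fact_mono_nat) simp
    then show False using that assms(1) by simp
  qed
  then have "(LEAST i. t < fact i) = Suc m" using assms(2) by (intro Least_equality) auto
  then show ?thesis unfolding next_fact_def by simp
qed

context escape_game
begin

lemma state_interior:
  assumes "is_min_strat \<A> \<sigma>" "is_max_strat \<B> \<tau>"
  shows "state x0 \<sigma> \<tau> t \<in> interior C"
  using assms by (induction t) (simp_all add: x0 turn_interior is_min_strat_def is_max_strat_def)

lemma state_ge_power:
  assumes "is_min_strat \<A> \<sigma>" "is_max_strat \<B> \<tau>"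
  shows "cone_le C ((c ^ t) *\<^sub>R x0) (state x0 \<sigma> \<tau> t)"
proof (induction t)
  case (Suc t)
  then show ?case
    using turn_lower[OF Suc _ ] assms c_pos by (simp add: is_min_strat_def is_max_strat_def mult.commute)
qed (simp add: cone_le_refl)

lemma gauge_state_le:
  assumes "is_min_strat \<A> \<sigma>" "is_max_strat \<B> \<tau>"
  shows "N (state x0 \<sigma> \<tau> (t + j)) \<le> K ^ j * N (state x0 \<sigma> \<tau> t)"
proof (induction j)
  case (Suc j)
  have "N (state x0 \<sigma> \<tau> (t + Suc j)) \<le> K * N (state x0 \<sigma> \<tau> (t + j))"
    using turn_gauge_le[OF state_interior[OF assms]] assms by (simp add: is_min_strat_def is_max_strat_def)
  also have "\<dots> \<le> K * (K ^ j * N (state x0 \<sigma> \<tau> t))" using Suc K_pos by simp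
  finally show ?case by (simp add: mult.assoc)
qed simp

context
  fixes e :: real assumes e: "e > 0"
begin

lemma exists_near_optimal_Min_move:
  assumes g: "pos_mono_homogeneous C g" and y: "y \<in> interior C"
  shows "\<exists>A\<in>\<A>. (SUP B\<in>\<B>. g ((y v* A) v* B)) \<le> (1 + e) * T g y"
proof -
  have "T g y < (1 + e) * T g y"
    using pos_mono_homogeneous_pos[OF pos_mono_homogeneous_shapley[OF g] y] e by simp
  then obtain A where "A \<in> \<A>" "(SUP B\<in>\<B>. g ((y v* A) v* B)) < (1 + e) * T g y"
    using cINF_less_iff[OF \<A>_nonempty bdd_below_Min_values[OF g y]] unfolding shapley_def by blast
  then show ?thesis by (auto intro: less_imp_le)
qed

lemma exists_near_optimal_Max_move:
  assumes g: "pos_mono_homogeneous C g" and y: "y \<in> interior C" and A: "A \<in> \<A>"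
  shows "\<exists>B\<in>\<B>. T g y \<le> (1 + e) * g ((y v* A) v* B)"
proof -
  define s where "s = (SUP B\<in>\<B>. g ((y v* A) v* B))"
  obtain B0 where B0: "B0 \<in> \<B>" using \<B>_nonempty by blast
  have "0 < s" using pos_mono_homogeneous_pos[OF g turn_interior[OF y A B0]]
      Max_value_le[OF g y A B0] by (simp add: s_def)
  then have "s / (1 + e) < s" using e by (simp add: field_simps)
  then obtain B where B: "B \<in> \<B>" "s / (1 + e) < g ((y v* A) v* B)"
    using less_cSUP_iff[OF \<B>_nonempty bdd_above_Max_values[OF g y A]] unfolding s_def by blast
  then have "s < (1 + e) * g ((y v* A) v* B)" using e by (simp add: field_simps)
  moreover have "T g y \<le> s" unfolding s_def by (rule shapley_le_Max_value[OF g y A])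
  ultimately show ?thesis using B(1) by (intro bexI[of _ B]) simp_all
qed

text \<open>The guard \<open>y \<in> interior C\<close> makes these choices legal moves also at states where no
  near-optimal move needs to exist.\<close>

definition min_move :: "(real ^ 'n \<Rightarrow> real) \<Rightarrow> real ^ 'n \<Rightarrow> 'n mat" where
  "min_move g y = (SOME A. A \<in> \<A> \<and>
     (y \<in> interior C \<longrightarrow> (SUP B\<in>\<B>. g ((y v* A) v* B)) \<le> (1 + e) * T g y))"

definition max_move :: "(real ^ 'n \<Rightarrow> real) \<Rightarrow> real ^ 'n \<Rightarrow> 'n mat \<Rightarrow> 'n mat" where
  "max_move g y A = (SOME B. B \<in> \<B> \<and>
     (y \<in> interior C \<longrightarrow> A \<in> \<A> \<longrightarrow> T g y \<le> (1 + e) * g ((y v* A) v* B)))"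

lemma
  assumes "pos_mono_homogeneous C g"
  shows min_move_in: "min_move g y \<in> \<A>"
    and min_move_near_optimal: "y \<in> interior C \<Longrightarrow> (SUP B\<in>\<B>. g ((y v* min_move g y) v* B)) \<le> (1 + e) * T g y"
proof -
  have "\<exists>A. A \<in> \<A> \<and> (y \<in> interior C \<longrightarrow> (SUP B\<in>\<B>. g ((y v* A) v* B)) \<le> (1 + e) * T g y)"
    using exists_near_optimal_Min_move[OF assms] \<A>_nonempty by blast
  from someI_ex[OF this] show "min_move g y \<in> \<A>"
    and "y \<in> interior C \<Longrightarrow> (SUP B\<in>\<B>. g ((y v* min_move g y) v* B)) \<le> (1 + e) * T g y"
    unfolding min_move_def by blast+
qed

lemma
  assumes "pos_mono_homogeneous C g"
  shows max_move_in: "max_move g y A \<in> \<B>"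
    and max_move_near_optimal: "y \<in> interior C \<Longrightarrow> A \<in> \<A> \<Longrightarrow> T g y \<le> (1 + e) * g ((y v* A) v* max_move g y A)"
proof -
  have "\<exists>B. B \<in> \<B> \<and> (y \<in> interior C \<longrightarrow> A \<in> \<A> \<longrightarrow> T g y \<le> (1 + e) * g ((y v* A) v* B))"
    using exists_near_optimal_Max_move[OF assms] \<B>_nonempty by blast
  from someI_ex[OF this] show "max_move g y A \<in> \<B>"
    and "y \<in> interior C \<Longrightarrow> A \<in> \<A> \<Longrightarrow> T g y \<le> (1 + e) * g ((y v* A) v* max_move g y A)"
    unfolding max_move_def by blast+
qed

end

text \<open>At time \<open>t\<close>, \<open>k - t mod k\<close> turns of the current block of length \<open>k\<close> remain.\<close>

definition block_strategy :: "real \<Rightarrow> nat \<Rightarrow> 'n min_strat" where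
  "block_strategy e k = markov_min x0 (\<lambda>t. min_move e ((T ^^ (k - Suc (t mod k))) N))"

lemma block_strategy_is_min_strat: "e > 0 \<Longrightarrow> is_min_strat \<A> (block_strategy e k)"
  unfolding is_min_strat_def block_strategy_def markov_min_def
  using min_move_in[OF _ pos_mono_homogeneous_iterate_gauge] by blast

context
  fixes e :: real and k :: nat and \<tau> :: "'n max_strat"
  assumes e: "e > 0" and k: "k \<ge> 1" and \<tau>: "is_max_strat \<B> \<tau>"
begin

lemma block_step:
  "(T ^^ (k - Suc (t mod k))) N (state x0 (block_strategy e k) \<tau> (Suc t))
     \<le> (1 + e) * (T ^^ (k - t mod k)) N (state x0 (block_strategy e k) \<tau> t)"
proof -
  define g where "g = (T ^^ (k - Suc (t mod k))) N"
  define z where "z = state x0 (block_strategy e k) \<tau> t"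
  define A where "A = min_move e g z"
  have g: "pos_mono_homogeneous C g" unfolding g_def by (rule pos_mono_homogeneous_iterate_gauge)
  have z: "z \<in> interior C"
    unfolding z_def using state_interior[OF block_strategy_is_min_strat[OF e] \<tau>] .
  have A: "A \<in> \<A>" unfolding A_def using min_move_in[OF e g] .
  have "k - t mod k = Suc (k - Suc (t mod k))" using mod_less_divisor[of k t] k by linarith
  then have Tg: "T g = (T ^^ (k - t mod k)) N" by (simp add: g_def)
  have "block_strategy e k (hist (block_strategy e k) \<tau> t) = A"
    unfolding A_def g_def z_def block_strategy_def by (rule markov_min_hist)
  then have "state x0 (block_strategy e k) \<tau> (Suc t) = (z v* A) v* \<tau> (hist (block_strategy e k) \<tau> t) A"
    by (simp add: z_def)
  then have "g (state x0 (block_strategy e k) \<tau> (Suc t)) \<le> (SUP B\<in>\<B>. g ((z v* A) v* B))"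
    using Max_value_le[OF g z A] \<tau> by (simp add: is_max_strat_def)
  also have "\<dots> \<le> (1 + e) * T g z" unfolding A_def using min_move_near_optimal[OF e g z] .
  finally show ?thesis unfolding Tg unfolding g_def z_def .
qed

lemma block_iterate:
  "j \<le> k \<Longrightarrow> (T ^^ (k - j)) N (state x0 (block_strategy e k) \<tau> (q * k + j))
     \<le> (1 + e) ^ j * (T ^^ k) N (state x0 (block_strategy e k) \<tau> (q * k))"
proof (induction j)
  case (Suc j)
  then have j: "(q * k + j) mod k = j" by simp
  have "(T ^^ (k - Suc j)) N (state x0 (block_strategy e k) \<tau> (Suc (q * k + j)))
      \<le> (1 + e) * (T ^^ (k - j)) N (state x0 (block_strategy e k) \<tau> (q * k + j))"
    using block_step[of "q * k + j"] unfolding j .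
  also have "\<dots> \<le> (1 + e) * ((1 + e) ^ j * (T ^^ k) N (state x0 (block_strategy e k) \<tau> (q * k)))"
    using Suc e by (intro mult_left_mono) auto
  finally show ?case by (simp only: add_Suc_right power_Suc mult.assoc)
qed simp

lemma gauge_block_start_le:
  "N (state x0 (block_strategy e k) \<tau> (q * k)) \<le> ((1 + e) ^ k * a k) ^ q"
proof (induction q)
  case (Suc q)
  have "N (state x0 (block_strategy e k) \<tau> (Suc q * k))
      \<le> (1 + e) ^ k * (T ^^ k) N (state x0 (block_strategy e k) \<tau> (q * k))"
    using block_iterate[of k q] by (simp add: add.commute)
  also have "\<dots> \<le> (1 + e) ^ k * (a k * N (state x0 (block_strategy e k) \<tau> (q * k)))"
    using iterate_gauge_le[OF state_interior[OF block_strategy_is_min_strat[OF e] \<tau>]] e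
    by (simp add: mult.commute)
  also have "\<dots> \<le> (1 + e) ^ k * (a k * ((1 + e) ^ k * a k) ^ q)"
    using Suc e iterated_gauge_pos[of k] by simp
  finally show ?case by (simp add: mult.assoc)
qed (simp add: gauge_self[OF x0])

lemma payoff_block_strategy_le:
  "payoff C x0 (block_strategy e k) \<tau> \<le> ereal (ln ((1 + e) ^ k * a k) / real k)"
proof -
  let ?z = "state x0 (block_strategy e k) \<tau>"
  have \<sigma>: "is_min_strat \<A> (block_strategy e k)" using e by (rule block_strategy_is_min_strat)
  have pos: "0 < N (?z t)" for t using gauge_pos[OF x0 state_interior[OF \<sigma> \<tau>]] .
  have bound: "N (?z t) \<le> max 1 K ^ k * ((1 + e) ^ k * a k) ^ (t div k)" for t
  proof -
    have "N (?z (t div k * k + t mod k)) \<le> K ^ (t mod k) * N (?z (t div k * k))"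
      by (rule gauge_state_le[OF \<sigma> \<tau>])
    also have "\<dots> \<le> max 1 K ^ k * ((1 + e) ^ k * a k) ^ (t div k)"
    proof (rule mult_mono)
      have "K ^ (t mod k) \<le> max 1 K ^ (t mod k)" using K_pos by (intro power_mono) auto
      also have "\<dots> \<le> max 1 K ^ k" using k by (intro power_increasing) (auto intro: less_imp_le)
      finally show "K ^ (t mod k) \<le> max 1 K ^ k" .
    qed (use gauge_block_start_le less_imp_le[OF pos] in auto)
    finally show ?thesis by simp
  qed
  have "limsup (\<lambda>t. ereal (ln (N (?z t)) / real t)) \<le> ereal (ln ((1 + e) ^ k * a k) / real k)"
    using e iterated_gauge_pos[of k] by (intro limsup_ln_div_le_of_block_bound[OF k _ _ pos bound]) auto
  then show ?thesis by (simp add: payoff_def funk_eq_ln_gauge)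
qed

end

lemma Min_guarantee:
  assumes "\<epsilon> > 0"
  shows "\<exists>\<sigma>. is_min_strat \<A> \<sigma> \<and> (\<forall>\<tau>. is_max_strat \<B> \<tau> \<longrightarrow> payoff C x0 \<sigma> \<tau> \<le> ereal (\<rho> + \<epsilon>))"
proof -
  obtain k where k: "k \<ge> 1" "ln (a k) / real k < \<rho> + \<epsilon> / 2"
    using escape_rate_less[of "\<rho> + \<epsilon> / 2"] assms by auto
  define e where "e = \<epsilon> / 2"
  have e: "e > 0" using assms by (simp add: e_def)
  have "ln ((1 + e) ^ k * a k) = real k * ln (1 + e) + ln (a k)"
    using e iterated_gauge_pos[of k] by (simp add: ln_mult_pos ln_realpow)
  then have "ln ((1 + e) ^ k * a k) / real k = ln (1 + e) + ln (a k) / real k"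
    using k(1) by (simp add: add_divide_distrib)
  also have "\<dots> \<le> \<rho> + \<epsilon>" using ln_add_one_self_le_self[of e] e k(2) by (simp add: e_def)
  finally have bound: "ln ((1 + e) ^ k * a k) / real k \<le> \<rho> + \<epsilon>" .
  show ?thesis
  proof (intro exI conjI allI impI)
    show "is_min_strat \<A> (block_strategy e k)" using e by (rule block_strategy_is_min_strat)
    fix \<tau> assume "is_max_strat \<B> \<tau>"
    show "payoff C x0 (block_strategy e k) \<tau> \<le> ereal (\<rho> + \<epsilon>)"
      using bound by (intro order_trans[OF payoff_block_strategy_le[OF e k(1) \<open>is_max_strat \<B> \<tau>\<close>]]) simp
  qed
qed

text \<open>At time \<open>t\<close>, Max plays for the horizon \<open>next_fact t\<close>, the end of the current phase.\<close>

definition phase_strategy :: "real \<Rightarrow> 'n max_strat" where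
  "phase_strategy e = markov_max x0 (\<lambda>t. max_move e ((T ^^ (next_fact t - Suc t)) N))"

lemma phase_strategy_is_max_strat: "e > 0 \<Longrightarrow> is_max_strat \<B> (phase_strategy e)"
  unfolding is_max_strat_def phase_strategy_def markov_max_def
  using max_move_in[OF _ pos_mono_homogeneous_iterate_gauge] by blast

context
  fixes e :: real and \<sigma> :: "'n min_strat"
  assumes e: "e > 0" and \<sigma>: "is_min_strat \<A> \<sigma>"
begin

lemma phase_step:
  "(T ^^ (next_fact t - t)) N (state x0 \<sigma> (phase_strategy e) t)
     \<le> (1 + e) * (T ^^ (next_fact t - Suc t)) N (state x0 \<sigma> (phase_strategy e) (Suc t))"
proof -
  define g where "g = (T ^^ (next_fact t - Suc t)) N"
  define z where "z = state x0 \<sigma> (phase_strategy e) t"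
  define A where "A = \<sigma> (hist \<sigma> (phase_strategy e) t)"
  have g: "pos_mono_homogeneous C g" unfolding g_def by (rule pos_mono_homogeneous_iterate_gauge)
  have z: "z \<in> interior C"
    unfolding z_def using state_interior[OF \<sigma> phase_strategy_is_max_strat[OF e]] .
  have A: "A \<in> \<A>" using \<sigma> by (simp add: A_def is_min_strat_def)
  have "next_fact t - t = Suc (next_fact t - Suc t)" using less_next_fact[of t] by linarith
  then have Tg: "T g = (T ^^ (next_fact t - t)) N" by (simp add: g_def)
  have "phase_strategy e (hist \<sigma> (phase_strategy e) t) A = max_move e g z A"
    unfolding g_def z_def phase_strategy_def by (rule markov_max_hist)
  then have "state x0 \<sigma> (phase_strategy e) (Suc t) = (z v* A) v* max_move e g z A"
    by (simp add: z_def A_def)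
  moreover have "T g z \<le> (1 + e) * g ((z v* A) v* max_move e g z A)"
    using max_move_near_optimal[OF e g z A] .
  ultimately show ?thesis unfolding Tg unfolding g_def z_def by simp
qed

lemma phase_iterate:
  "j \<le> fact (Suc m) - fact m \<Longrightarrow>
    (T ^^ (fact (Suc m) - fact m)) N (state x0 \<sigma> (phase_strategy e) (fact m))
      \<le> (1 + e) ^ j * (T ^^ (fact (Suc m) - fact m - j)) N (state x0 \<sigma> (phase_strategy e) (fact m + j))"
proof (induction j)
  case (Suc j)
  let ?L = "fact (Suc m) - fact m" and ?t = "fact m + j"
  have "next_fact ?t = fact (Suc m)" using Suc.prems by (intro next_fact_eq) auto
  then have "next_fact ?t - ?t = ?L - j" "next_fact ?t - Suc ?t = ?L - Suc j" by simp_all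
  then have step: "(T ^^ (?L - j)) N (state x0 \<sigma> (phase_strategy e) ?t)
      \<le> (1 + e) * (T ^^ (?L - Suc j)) N (state x0 \<sigma> (phase_strategy e) (Suc ?t))"
    using phase_step[of ?t] by (simp only:)
  have "(T ^^ ?L) N (state x0 \<sigma> (phase_strategy e) (fact m))
      \<le> (1 + e) ^ j * (T ^^ (?L - j)) N (state x0 \<sigma> (phase_strategy e) ?t)"
    using Suc.IH Suc.prems by simp
  also have "\<dots> \<le> (1 + e) ^ j * ((1 + e) * (T ^^ (?L - Suc j)) N (state x0 \<sigma> (phase_strategy e) (Suc ?t)))"
    using step e by (intro mult_left_mono) auto
  finally show ?case by (simp only: add_Suc_right power_Suc ac_simps)
qed simp

lemma phase_end:
  assumes m: "m \<ge> 1"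
  shows "c ^ fact m * exp (\<rho> * real (fact (Suc m) - fact m))
    \<le> (1 + e) ^ (fact (Suc m) - fact m) * N (state x0 \<sigma> (phase_strategy e) (fact (Suc m)))"
proof -
  let ?L = "fact (Suc m) - fact m :: nat"
  have "fact m \<le> (fact (Suc m) :: nat)" by (rule fact_mono_nat) simp
  have "fact (Suc m) = Suc m * (fact m :: nat)" by simp
  then have L: "?L \<ge> 1" using m fact_ge_1[of m, where 'a=nat] by (simp add: diff_mult_distrib)
  have "c ^ fact m * exp (\<rho> * real ?L) \<le> c ^ fact m * a ?L"
    using exp_escape_rate_le[OF L] c_pos by simp
  also have "\<dots> \<le> (T ^^ ?L) N (state x0 \<sigma> (phase_strategy e) (fact m))"
    using iterate_gauge_ge[OF state_interior[OF \<sigma> phase_strategy_is_max_strat[OF e]] _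
        state_ge_power[OF \<sigma> phase_strategy_is_max_strat[OF e]]] c_pos by simp
  also have "\<dots> \<le> (1 + e) ^ ?L * N (state x0 \<sigma> (phase_strategy e) (fact m + ?L))"
    using phase_iterate[of ?L m] by simp
  finally show ?thesis using \<open>fact m \<le> fact (Suc m)\<close> by simp
qed

lemma ln_gauge_phase_end_ge:
  assumes m: "m \<ge> 1"
  shows "(ln c + real m * (\<rho> - ln (1 + e))) / (real m + 1)
    \<le> ln (N (state x0 \<sigma> (phase_strategy e) (fact (Suc m)))) / real (fact (Suc m) :: nat)"
proof -
  define F where "F = real (fact m :: nat)"
  define L where "L = real (fact (Suc m) - fact m :: nat)"
  define n where "n = N (state x0 \<sigma> (phase_strategy e) (fact (Suc m)))"
  have n: "n > 0"
    unfolding n_def using gauge_pos[OF x0 state_interior[OF \<sigma> phase_strategy_is_max_strat[OF e]]] .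
  have F: "F > 0" by (simp add: F_def)
  have fact_Suc: "real (fact (Suc m) :: nat) = (real m + 1) * F" by (simp add: F_def algebra_simps)
  have "fact m \<le> (fact (Suc m) :: nat)" by (rule fact_mono_nat) simp
  then have LF: "L = real m * F" by (simp add: L_def F_def of_nat_diff algebra_simps)
  have "ln (c ^ fact m * exp (\<rho> * L)) \<le> ln ((1 + e) ^ (fact (Suc m) - fact m) * n)"
    using phase_end[OF m] c_pos n e unfolding L_def n_def by (subst ln_le_cancel_iff) auto
  then have "F * ln c + \<rho> * L \<le> L * ln (1 + e) + ln n"
    using c_pos n e by (simp add: ln_mult_pos ln_realpow F_def L_def)
  then have "F * (ln c + real m * (\<rho> - ln (1 + e))) \<le> ln n" by (simp add: LF algebra_simps)
  then have "ln c + real m * (\<rho> - ln (1 + e)) \<le> ln n / F" using F by (simp add: pos_le_divide_eq mult.commute)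
  then have "(ln c + real m * (\<rho> - ln (1 + e))) / (real m + 1) \<le> ln n / F / (real m + 1)"
    by (intro divide_right_mono) auto
  also have "ln n / F / (real m + 1) = ln n / real (fact (Suc m) :: nat)"
    unfolding fact_Suc by (simp add: divide_divide_eq_left mult.commute)
  finally show ?thesis unfolding n_def .
qed

lemma payoff_phase_strategy_ge: "ereal (\<rho> - ln (1 + e)) \<le> payoff C x0 \<sigma> (phase_strategy e)"
  unfolding payoff_def funk_eq_ln_gauge
proof (rule limsup_ge_of_subseq)
  show "strict_mono (\<lambda>m. fact (Suc m) :: nat)"
    unfolding strict_mono_Suc_iff by (intro allI fact_less_mono_nat) auto
  show "\<forall>\<^sub>F m in sequentially. (ln c + real m * (\<rho> - ln (1 + e))) / (real m + 1)
      \<le> ln (N (state x0 \<sigma> (phase_strategy e) (fact (Suc m)))) / real (fact (Suc m) :: nat)"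
    using ln_gauge_phase_end_ge by (auto simp: eventually_sequentially)
  have "(\<lambda>m. (\<rho> - ln (1 + e)) + (ln c - (\<rho> - ln (1 + e))) / real (Suc m)) \<longlonglongrightarrow> \<rho> - ln (1 + e)"
    using tendsto_add[OF tendsto_const LIMSEQ_Suc[OF lim_const_over_n]] by simp
  then show "(\<lambda>m. (ln c + real m * (\<rho> - ln (1 + e))) / (real m + 1)) \<longlonglongrightarrow> \<rho> - ln (1 + e)"
    by (simp add: field_simps)
qed

end

lemma Max_guarantee:
  assumes "\<epsilon> > 0"
  shows "\<exists>\<tau>. is_max_strat \<B> \<tau> \<and> (\<forall>\<sigma>. is_min_strat \<A> \<sigma> \<longrightarrow> payoff C x0 \<sigma> \<tau> \<ge> ereal (\<rho> - \<epsilon>))"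
proof (intro exI conjI allI impI)
  show "is_max_strat \<B> (phase_strategy \<epsilon>)" using assms by (rule phase_strategy_is_max_strat)
  fix \<sigma> assume "is_min_strat \<A> \<sigma>"
  have "ereal (\<rho> - \<epsilon>) \<le> ereal (\<rho> - ln (1 + \<epsilon>))" using ln_add_one_self_le_self[of \<epsilon>] assms by simp
  also have "\<dots> \<le> payoff C x0 \<sigma> (phase_strategy \<epsilon>)"
    using payoff_phase_strategy_ge[OF assms \<open>is_min_strat \<A> \<sigma>\<close>] .
  finally show "payoff C x0 \<sigma> (phase_strategy \<epsilon>) \<ge> ereal (\<rho> - \<epsilon>)" .
qed

lemma game_value: "is_game_value C \<A> \<B> x0 \<rho>"
  unfolding is_game_value_def using Min_guarantee Max_guarantee by blast

end

section \<open>Dependence on the base point and on the action sets\<close>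

lemma INF_ln_div_le_of_dominated:
  fixes a b :: "nat \<Rightarrow> real"
  assumes pos: "\<And>k. a k > 0" "\<And>k. b k > 0" and D: "D > 0"
    and dom: "\<And>k. a k \<le> D * b k" and submult: "\<And>j k. b (j * k) \<le> b k ^ j"
    and bdd: "bdd_below ((\<lambda>k. ln (a k) / real k) ` {1..})"
  shows "(INF k\<in>{1..}. ln (a k) / real k) \<le> (INF k\<in>{1..}. ln (b k) / real k)"
proof (rule cINF_greatest)
  fix k :: nat assume "k \<in> {1..}"
  then have k: "real k > 0" by simp
  let ?I = "INF k\<in>{1..}. ln (a k) / real k"
  have "?I \<le> ln (b k) / real k + (ln D / real k) / real j" if j: "j \<ge> 1" for j
  proof -
    have "?I \<le> ln (a (j * k)) / real (j * k)"
      using bdd j \<open>k \<in> {1..}\<close> by (intro cINF_lower) auto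
    also have "ln (a (j * k)) \<le> ln D + real j * ln (b k)"
    proof -
      have "a (j * k) \<le> D * b k ^ j"
        using dom[of "j * k"] submult[of j k] D by (meson mult_left_mono less_imp_le order_trans)
      then have "ln (a (j * k)) \<le> ln (D * b k ^ j)" using pos D by simp
      then show ?thesis using pos D by (simp add: ln_mult_pos ln_realpow)
    qed
    then have "ln (a (j * k)) / real (j * k) \<le> (ln D + real j * ln (b k)) / real (j * k)"
      using j k by (intro divide_right_mono) auto
    also have "\<dots> = ln (b k) / real k + (ln D / real k) / real j"
      using j k by (simp add: field_simps)
    finally show ?thesis .
  qed
  moreover have "(\<lambda>j. ln (b k) / real k + (ln D / real k) / real j) \<longlonglongrightarrow> ln (b k) / real k"
    using tendsto_add[OF tendsto_const lim_const_over_n[of "ln D / real k"]] by (simp only: add_0_right)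
  ultimately show "?I \<le> ln (b k) / real k"
    by (intro LIMSEQ_le_const[of _ "ln (b k) / real k"]) auto
qed simp

context proper_cone
begin

lemma escape_rate_le_base:
  assumes G0: "escape_game C x0 \<A> \<B> c K" and G1: "escape_game C x1 \<A> \<B> c1 K1"
  shows "escape_rate C \<A> \<B> x1 \<le> escape_rate C \<A> \<B> x0"
  unfolding escape_rate_def
proof (rule INF_ln_div_le_of_dominated)
  have x0: "x0 \<in> interior C" and x1: "x1 \<in> interior C"
    using escape_game.x0[OF G0] escape_game.x0[OF G1] .
  show "iterated_gauge C \<A> \<B> x1 k > 0" "iterated_gauge C \<A> \<B> x0 k > 0" for k
    using escape_game.iterated_gauge_pos[OF G1] escape_game.iterated_gauge_pos[OF G0] .
  show "gauge C x1 x0 * gauge C x0 x1 > 0" using gauge_pos x0 x1 by simp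
  show "iterated_gauge C \<A> \<B> x0 (j * k) \<le> iterated_gauge C \<A> \<B> x0 k ^ j" for j k
    by (rule escape_game.iterated_gauge_mult_le[OF G0])
  show "bdd_below ((\<lambda>k. ln (iterated_gauge C \<A> \<B> x1 k) / real k) ` {1..})"
    by (rule escape_game.bdd_below_escape_rate[OF G1])
  fix k
  have "iterated_gauge C \<A> \<B> x1 k \<le> gauge C x1 x0 * (shapley \<A> \<B> ^^ k) (gauge C x0) x1"
    unfolding iterated_gauge_def
    using escape_game.iterate_le_const_mult[OF G0 pos_mono_homogeneous_gauge[OF x1]
        pos_mono_homogeneous_gauge[OF x0] gauge_pos[OF x1 x0] _ x1] gauge_change_base[OF x0 x1] .
  also have "\<dots> \<le> gauge C x1 x0 * (gauge C x0 x1 * iterated_gauge C \<A> \<B> x0 k)"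
    using escape_game.iterate_gauge_le[OF G0 x1] gauge_pos[OF x1 x0] by (intro mult_left_mono) auto
  finally show "iterated_gauge C \<A> \<B> x1 k \<le> gauge C x1 x0 * gauge C x0 x1 * iterated_gauge C \<A> \<B> x0 k"
    by (simp add: mult.assoc)
qed

lemma escape_rate_base_independent:
  "escape_game C x0 \<A> \<B> c K \<Longrightarrow> escape_game C x1 \<A> \<B> c1 K1 \<Longrightarrow>
    escape_rate C \<A> \<B> x1 = escape_rate C \<A> \<B> x0"
  using escape_rate_le_base by (blast intro: antisym)

context
  fixes x0 \<A>1 \<B>1 \<A>2 \<B>2 c1 K1 c2 K2 \<alpha> \<beta>
  assumes G1: "escape_game C x0 \<A>1 \<B>1 c1 K1" and G2: "escape_game C x0 \<A>2 \<B>2 c2 K2"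
    and \<alpha>: "\<alpha> > 0" and \<beta>: "\<beta> > 0"
    and dom\<A>: "\<forall>A2\<in>\<A>2. \<exists>A1\<in>\<A>1. end_le C A1 (\<alpha> *\<^sub>R A2)"
    and dom\<B>: "\<forall>B1\<in>\<B>1. \<exists>B2\<in>\<B>2. end_le C B1 (\<beta> *\<^sub>R B2)"
begin

lemma shapley_le_of_dominated:
  assumes g: "pos_mono_homogeneous C g" and y: "y \<in> interior C"
  shows "shapley \<A>1 \<B>1 g y \<le> \<alpha> * \<beta> * shapley \<A>2 \<B>2 g y"
proof -
  have "shapley \<A>1 \<B>1 g y \<le> \<alpha> * \<beta> * (SUP B2\<in>\<B>2. g ((y v* A2) v* B2))" if A2: "A2 \<in> \<A>2" for A2
  proof -
    obtain A1 where A1: "A1 \<in> \<A>1" "end_le C A1 (\<alpha> *\<^sub>R A2)" using dom\<A> A2 by blast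
    have "g ((y v* A1) v* B1) \<le> \<alpha> * \<beta> * (SUP B2\<in>\<B>2. g ((y v* A2) v* B2))" if B1: "B1 \<in> \<B>1" for B1
    proof -
      obtain B2 where B2: "B2 \<in> \<B>2" "end_le C B1 (\<beta> *\<^sub>R B2)" using dom\<B> B1 by blast
      have yA2: "y v* A2 \<in> interior C"
        using End_int_interior escape_game.\<A>_End[OF G2] A2 y by blast
      have "cone_le C (y v* A1) (\<alpha> *\<^sub>R (y v* A2))"
        using A1(2) y by (simp add: end_le_def vector_scaleR_matrix_ac)
      then have "cone_le C ((y v* A1) v* B1) (\<alpha> *\<^sub>R ((y v* A2) v* B1))"
        using End_int_mono escape_game.\<B>_End[OF G1] B1 by (fastforce simp: scaleR_vector_matrix_assoc)
      moreover have "cone_le C (\<alpha> *\<^sub>R ((y v* A2) v* B1)) (\<alpha> *\<^sub>R (\<beta> *\<^sub>R ((y v* A2) v* B2)))"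
        using B2(2) yA2 \<alpha> by (intro cone_le_scaleR) (auto simp: end_le_def vector_scaleR_matrix_ac)
      ultimately have le: "cone_le C ((y v* A1) v* B1) ((\<alpha> * \<beta>) *\<^sub>R ((y v* A2) v* B2))"
        using cone_le_trans by simp
      have int: "(y v* A2) v* B2 \<in> interior C" using escape_game.turn_interior[OF G2 y A2 B2(1)] .
      have "g ((y v* A1) v* B1) \<le> \<alpha> * \<beta> * g ((y v* A2) v* B2)"
        using pos_mono_homogeneous_mono[OF g escape_game.turn_interior[OF G1 y A1(1) B1]
            interior_scaleR[OF int] le] pos_mono_homogeneous_scaleR[OF g int] \<alpha> \<beta> by simp
      also have "\<dots> \<le> \<alpha> * \<beta> * (SUP B2\<in>\<B>2. g ((y v* A2) v* B2))"
        using escape_game.Max_value_le[OF G2 g y A2 B2(1)] \<alpha> \<beta> by simp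
      finally show ?thesis .
    qed
    then have "(SUP B1\<in>\<B>1. g ((y v* A1) v* B1)) \<le> \<alpha> * \<beta> * (SUP B2\<in>\<B>2. g ((y v* A2) v* B2))"
      using escape_game.\<B>_nonempty[OF G1] by (intro cSUP_least) auto
    then show ?thesis using escape_game.shapley_le_Max_value[OF G1 g y A1(1)] by linarith
  qed
  then have "shapley \<A>1 \<B>1 g y / (\<alpha> * \<beta>) \<le> shapley \<A>2 \<B>2 g y"
    unfolding shapley_def[of \<A>2] using escape_game.\<A>_nonempty[OF G2] \<alpha> \<beta>
    by (intro cINF_greatest) (auto simp: field_simps)
  then show ?thesis using \<alpha> \<beta> by (simp add: field_simps)
qed

lemma iterate_le_of_dominated:
  assumes g: "pos_mono_homogeneous C g"
  shows "y \<in> interior C \<Longrightarrow> (shapley \<A>1 \<B>1 ^^ k) g y \<le> (\<alpha> * \<beta>) ^ k * (shapley \<A>2 \<B>2 ^^ k) g y"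
proof (induction k arbitrary: y)
  case (Suc k)
  let ?T1 = "shapley \<A>1 \<B>1" and ?T2 = "shapley \<A>2 \<B>2"
  have g1: "pos_mono_homogeneous C ((?T1 ^^ k) g)" and g2: "pos_mono_homogeneous C ((?T2 ^^ k) g)"
    using escape_game.pos_mono_homogeneous_iterate[OF G1 g] escape_game.pos_mono_homogeneous_iterate[OF G2 g] .
  have ab: "(\<alpha> * \<beta>) ^ k > 0" using \<alpha> \<beta> by simp
  have "(?T1 ^^ Suc k) g y \<le> ?T1 (\<lambda>z. (\<alpha> * \<beta>) ^ k * (?T2 ^^ k) g z) y"
    using escape_game.shapley_mono[OF G1 g1 pos_mono_homogeneous_const_mult[OF g2 ab] Suc.IH Suc.prems]
    by simp
  also have "\<dots> = (\<alpha> * \<beta>) ^ k * ?T1 ((?T2 ^^ k) g) y"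
    using escape_game.shapley_const_mult[OF G1 g2 ab Suc.prems] .
  also have "\<dots> \<le> (\<alpha> * \<beta>) ^ k * (\<alpha> * \<beta> * ?T2 ((?T2 ^^ k) g) y)"
    using shapley_le_of_dominated[OF g2 Suc.prems] ab by (intro mult_left_mono) auto
  finally show ?case by (simp add: ac_simps)
qed simp

lemma escape_rate_le_of_dominated:
  "escape_rate C \<A>1 \<B>1 x0 \<le> escape_rate C \<A>2 \<B>2 x0 + ln (\<alpha> * \<beta>)"
proof -
  have x0: "x0 \<in> interior C" by (rule escape_game.x0[OF G1])
  have "escape_rate C \<A>1 \<B>1 x0 \<le> ln (iterated_gauge C \<A>2 \<B>2 x0 k) / real k + ln (\<alpha> * \<beta>)"
    if k: "k \<in> {1..}" for k
  proof -
    have pos: "iterated_gauge C \<A>2 \<B>2 x0 k > 0" by (rule escape_game.iterated_gauge_pos[OF G2])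
    have "iterated_gauge C \<A>1 \<B>1 x0 k \<le> (\<alpha> * \<beta>) ^ k * iterated_gauge C \<A>2 \<B>2 x0 k"
      unfolding iterated_gauge_def using iterate_le_of_dominated[OF pos_mono_homogeneous_gauge[OF x0] x0] .
    then have "ln (iterated_gauge C \<A>1 \<B>1 x0 k) \<le> ln ((\<alpha> * \<beta>) ^ k * iterated_gauge C \<A>2 \<B>2 x0 k)"
      using escape_game.iterated_gauge_pos[OF G1] pos \<alpha> \<beta> by simp
    also have "\<dots> = real k * ln (\<alpha> * \<beta>) + ln (iterated_gauge C \<A>2 \<B>2 x0 k)"
      using pos \<alpha> \<beta> by (simp add: ln_mult_pos[of "(\<alpha> * \<beta>) ^ k"] ln_realpow)
    finally have "ln (iterated_gauge C \<A>1 \<B>1 x0 k) \<le> real k * ln (\<alpha> * \<beta>) + ln (iterated_gauge C \<A>2 \<B>2 x0 k)" .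
    then have "ln (iterated_gauge C \<A>1 \<B>1 x0 k) / real k \<le> ln (iterated_gauge C \<A>2 \<B>2 x0 k) / real k + ln (\<alpha> * \<beta>)"
      using k by (simp add: field_simps)
    then show ?thesis using escape_game.escape_rate_le[OF G1, of k] k by simp
  qed
  then have "escape_rate C \<A>1 \<B>1 x0 - ln (\<alpha> * \<beta>) \<le> escape_rate C \<A>2 \<B>2 x0"
    unfolding escape_rate_def[of C \<A>2] by (intro cINF_greatest) force+
  then show ?thesis by simp
qed

end

end

section \<open>Finite nets in Thompson-compact sets\<close>

lemma finite_cover_or_separated_seq:
  "(\<exists>F. finite F \<and> F \<subseteq> S \<and> (\<forall>x\<in>S. \<exists>y\<in>F. R y x)) \<or>
   (\<exists>f :: nat \<Rightarrow> 'a. (\<forall>n. f n \<in> S) \<and> (\<forall>i j. i < j \<longrightarrow> \<not> R (f i) (f j)))"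
proof (cases "\<exists>F. finite F \<and> F \<subseteq> S \<and> (\<forall>x\<in>S. \<exists>y\<in>F. R y x)")
  case False
  then have new: "\<exists>x. x \<in> S \<and> (\<forall>y\<in>F. \<not> R y x)" if "finite F" "F \<subseteq> S" for F
    using that by auto
  define pick where "pick F = (SOME x. x \<in> S \<and> (\<forall>y\<in>F. \<not> R y x))" for F
  have pick: "pick F \<in> S \<and> (\<forall>y\<in>F. \<not> R y (pick F))" if "finite F" "F \<subseteq> S" for F
    unfolding pick_def using someI_ex[OF new[OF that]] .
  define xs where "xs n = rec_nat [] (\<lambda>_ l. l @ [pick (set l)]) n" for n
  define f where "f n = pick (set (xs n))" for n
  have set_xs: "set (xs n) = f ` {..<n}" for n
    by (induction n) (simp_all add: xs_def f_def lessThan_Suc)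
  have f_eq: "f n = pick (f ` {..<n})" for n
    using set_xs[of n] by (simp only: f_def)
  have f: "f n \<in> S \<and> (\<forall>i<n. \<not> R (f i) (f n))" for n
  proof (induction n rule: less_induct)
    case (less n)
    then have "pick (f ` {..<n}) \<in> S \<and> (\<forall>y\<in>f ` {..<n}. \<not> R y (pick (f ` {..<n})))"
      by (intro pick) auto
    then show ?case unfolding f_eq[of n] by auto
  qed
  then show ?thesis by blast
qed simp

context proper_cone
begin

lemma end_le_trans: "end_le C A B \<Longrightarrow> end_le C B D \<Longrightarrow> end_le C A D"
  unfolding end_le_def using cone_le_trans by blast

lemma end_le_scaleR: "end_le C A B \<Longrightarrow> 0 \<le> t \<Longrightarrow> end_le C (t *\<^sub>R A) (t *\<^sub>R B)"
  unfolding end_le_def using cone_le_scaleR by (simp add: vector_scaleR_matrix_ac)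

lemma end_le_scaleR_mono: "A \<in> End_int C \<Longrightarrow> s \<le> t \<Longrightarrow> end_le C (s *\<^sub>R A) (t *\<^sub>R A)"
  unfolding end_le_def
  using scaleR_cone_le_scaleR_iff[OF End_int_interior] by (simp add: vector_scaleR_matrix_ac)

lemma end_le_mult:
  "end_le C A (a *\<^sub>R B) \<Longrightarrow> end_le C B (b *\<^sub>R D) \<Longrightarrow> a \<ge> 0 \<Longrightarrow> end_le C A ((a * b) *\<^sub>R D)"
  using end_le_trans end_le_scaleR by fastforce

lemma end_le_of_funk_end_less:
  assumes A': "A' \<in> End_int C" and c: "c > 0" "end_le C A (c *\<^sub>R A')" and s: "funk_end C A A' < s"
  shows "end_le C A (exp s *\<^sub>R A')"
proof -
  define L where "L = {l. l > 0 \<and> end_le C A (l *\<^sub>R A')}"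
  have "L \<noteq> {}" using c by (auto simp: L_def)
  moreover have "Inf L < exp s"
  proof (cases "Inf L > 0")
    case True
    then show ?thesis using s unfolding funk_end_def L_def[symmetric] by (metis exp_less_cancel_iff exp_ln)
  next
    case False
    then show ?thesis using exp_gt_zero[of s] by linarith
  qed
  ultimately obtain l where "l \<in> L" "l < exp s" using cInf_lessD by blast
  then show ?thesis using end_le_trans end_le_scaleR_mono[OF A'] by (auto simp: L_def)
qed

lemma thompson_less_imp_end_le:
  assumes part: "in_same_part C S" and A: "A \<in> S" and A': "A' \<in> S" and s: "thompson C A A' < s"
  shows "end_le C A (exp s *\<^sub>R A')"
proof -
  obtain c where "c > 0" "end_le C A (c *\<^sub>R A')"
    using part A A' unfolding in_same_part_def comparable_def by blast
  moreover have "A' \<in> End_int C" using part A' by (auto simp: in_same_part_def)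
  ultimately show ?thesis using end_le_of_funk_end_less s by (simp add: thompson_def)
qed

lemma thompson_compact_finite_net:
  assumes part: "in_same_part C S" and cpt: "thompson_compact C S" and \<delta>: "\<delta> > 0"
  shows "\<exists>F. finite F \<and> F \<subseteq> S \<and> (\<forall>A\<in>S. \<exists>A'\<in>F. end_le C A' (exp \<delta> *\<^sub>R A) \<and> end_le C A (exp \<delta> *\<^sub>R A'))"
proof -
  define R where "R A' A \<longleftrightarrow> end_le C A' (exp \<delta> *\<^sub>R A) \<and> end_le C A (exp \<delta> *\<^sub>R A')" for A' A
  have no_sep: "\<not> (\<exists>f :: nat \<Rightarrow> 'n mat. (\<forall>n. f n \<in> S) \<and> (\<forall>i j. i < j \<longrightarrow> \<not> R (f i) (f j)))"
  proof
    assume "\<exists>f :: nat \<Rightarrow> 'n mat. (\<forall>n. f n \<in> S) \<and> (\<forall>i j. i < j \<longrightarrow> \<not> R (f i) (f j))"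
    then obtain f :: "nat \<Rightarrow> 'n mat" where f: "\<And>n. f n \<in> S" "\<And>i j. i < j \<Longrightarrow> \<not> R (f i) (f j)"
      by blast
    obtain l r where l: "l \<in> S" and r: "strict_mono r" and lim: "(\<lambda>k. thompson C (f (r k)) l) \<longlonglongrightarrow> 0"
      using cpt f(1) unfolding thompson_compact_def by blast
    obtain k0 where k0: "\<And>k. k \<ge> k0 \<Longrightarrow> thompson C (f (r k)) l < \<delta> / 2"
      using order_tendstoD(2)[OF lim, of "\<delta> / 2"] \<delta> by (auto simp: eventually_sequentially)
    have close: "end_le C (f (r k)) (exp (\<delta> / 2) *\<^sub>R l)" "end_le C l (exp (\<delta> / 2) *\<^sub>R f (r k))"
      if "k \<ge> k0" for k
      using thompson_less_imp_end_le[OF part f(1) l k0[OF that]]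
        thompson_less_imp_end_le[OF part l f(1), of _ "\<delta> / 2"] k0[OF that]
      by (simp_all add: thompson_def max.commute)
    have half: "exp (\<delta> / 2) * exp (\<delta> / 2) = exp \<delta>" by (simp flip: exp_add)
    have "R (f (r k0)) (f (r (Suc k0)))"
      unfolding R_def using end_le_mult[OF close(1) close(2)] half by auto
    then show False using f(2) r by (auto simp: strict_mono_def)
  qed
  have "\<exists>F. finite F \<and> F \<subseteq> S \<and> (\<forall>A\<in>S. \<exists>A'\<in>F. R A' A)"
    using finite_cover_or_separated_seq[of S R] no_sep by blast
  then show ?thesis unfolding R_def .
qed

lemma finite_interior_bounds:
  assumes "finite V" "V \<subseteq> interior C" and x0: "x0 \<in> interior C"
  shows "\<exists>c>0. \<exists>K>0. \<forall>v\<in>V. cone_le C (c *\<^sub>R x0) v \<and> cone_le C v (K *\<^sub>R x0)"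
  using assms(1,2)
proof (induction V rule: finite_induct)
  case empty
  show ?case using zero_less_one by blast
next
  case (insert v V)
  then obtain c K where cK: "c > 0" "K > 0" "\<forall>w\<in>V. cone_le C (c *\<^sub>R x0) w \<and> cone_le C w (K *\<^sub>R x0)"
    by auto
  obtain \<beta> where \<beta>: "\<beta> > 0" "cone_le C (\<beta> *\<^sub>R x0) v" using interior_absorbs insert.prems by blast
  obtain l where l: "l > 0" "cone_le C v (l *\<^sub>R x0)" using interior_dominates[OF x0] by blast
  have "cone_le C (min c \<beta> *\<^sub>R x0) w" if "cone_le C (c *\<^sub>R x0) w \<or> cone_le C (\<beta> *\<^sub>R x0) w" for w
    using that scaleR_cone_le_scaleR_iff[OF x0] cone_le_trans by (meson min.cobounded1 min.cobounded2)
  moreover have "cone_le C w (max K l *\<^sub>R x0)" if "cone_le C w (K *\<^sub>R x0) \<or> cone_le C w (l *\<^sub>R x0)" for w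
    using that scaleR_cone_le_scaleR_iff[OF x0] cone_le_trans by (meson max.cobounded1 max.cobounded2)
  ultimately have "\<forall>w\<in>insert v V. cone_le C (min c \<beta> *\<^sub>R x0) w \<and> cone_le C w (max K l *\<^sub>R x0)"
    using cK(3) \<beta>(2) l(2) by blast
  moreover have "min c \<beta> > 0" "max K l > 0" using cK \<beta> l by auto
  ultimately show ?case by blast
qed

lemma bounds_of_finite_net:
  assumes x0: "x0 \<in> interior C" and F: "finite F" "F \<subseteq> End_int C" and \<gamma>: "\<gamma> > 0"
    and net: "\<forall>A\<in>S. \<exists>A'\<in>F. end_le C A' (\<gamma> *\<^sub>R A) \<and> end_le C A (\<gamma> *\<^sub>R A')"
  shows "\<exists>c>0. \<exists>K>0. \<forall>A\<in>S. cone_le C (c *\<^sub>R x0) (x0 v* A) \<and> cone_le C (x0 v* A) (K *\<^sub>R x0)"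
proof -
  have "(\<lambda>A. x0 v* A) ` F \<subseteq> interior C" using F(2) x0 End_int_interior by blast
  then obtain c K where c: "c > 0" and K: "K > 0"
    and cK: "\<forall>v\<in>(\<lambda>A. x0 v* A) ` F. cone_le C (c *\<^sub>R x0) v \<and> cone_le C v (K *\<^sub>R x0)"
    using finite_interior_bounds[OF finite_imageI[OF F(1)] _ x0] by blast
  have "cone_le C ((c / \<gamma>) *\<^sub>R x0) (x0 v* A) \<and> cone_le C (x0 v* A) ((\<gamma> * K) *\<^sub>R x0)" if A: "A \<in> S" for A
  proof
    obtain A' where A': "A' \<in> F" "end_le C A' (\<gamma> *\<^sub>R A)" "end_le C A (\<gamma> *\<^sub>R A')" using net A by blast
    have x0A': "cone_le C (c *\<^sub>R x0) (x0 v* A')" "cone_le C (x0 v* A') (K *\<^sub>R x0)"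
      using cK A'(1) by auto
    have "cone_le C (x0 v* A') (\<gamma> *\<^sub>R (x0 v* A))"
      using A'(2) x0 by (simp add: end_le_def vector_scaleR_matrix_ac)
    then have "cone_le C (c *\<^sub>R x0) (\<gamma> *\<^sub>R (x0 v* A))" using x0A'(1) cone_le_trans by blast
    then have "cone_le C ((1 / \<gamma>) *\<^sub>R (c *\<^sub>R x0)) ((1 / \<gamma>) *\<^sub>R (\<gamma> *\<^sub>R (x0 v* A)))"
      using \<gamma> by (intro cone_le_scaleR) auto
    then show "cone_le C ((c / \<gamma>) *\<^sub>R x0) (x0 v* A)" using \<gamma> by simp
    have "cone_le C (x0 v* A) (\<gamma> *\<^sub>R (x0 v* A'))"
      using A'(3) x0 by (simp add: end_le_def vector_scaleR_matrix_ac)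
    moreover have "cone_le C (\<gamma> *\<^sub>R (x0 v* A')) (\<gamma> *\<^sub>R (K *\<^sub>R x0))"
      using x0A'(2) \<gamma> by (intro cone_le_scaleR) auto
    ultimately show "cone_le C (x0 v* A) ((\<gamma> * K) *\<^sub>R x0)" using cone_le_trans by simp
  qed
  moreover have "c / \<gamma> > 0" "\<gamma> * K > 0" using c K \<gamma> by simp_all
  ultimately show ?thesis by blast
qed

lemma escape_game_intro:
  assumes x0: "x0 \<in> interior C" and ne: "\<A> \<noteq> {}" "\<B> \<noteq> {}" and E: "\<A> \<subseteq> End_int C" "\<B> \<subseteq> End_int C"
    and \<A>: "cA > 0" "KA > 0" "\<forall>A\<in>\<A>. cone_le C (cA *\<^sub>R x0) (x0 v* A) \<and> cone_le C (x0 v* A) (KA *\<^sub>R x0)"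
    and \<B>: "cB > 0" "KB > 0" "\<forall>B\<in>\<B>. cone_le C (cB *\<^sub>R x0) (x0 v* B) \<and> cone_le C (x0 v* B) (KB *\<^sub>R x0)"
  shows "escape_game C x0 \<A> \<B> (cA * cB) (KA * KB)"
proof unfold_locales
  fix A B assume A: "A \<in> \<A>" and B: "B \<in> \<B>"
  then have BE: "B \<in> End_int C" using E by blast
  have "cone_le C (cA *\<^sub>R (cB *\<^sub>R x0)) (cA *\<^sub>R (x0 v* B))"
    using \<B>(3) B \<A>(1) by (intro cone_le_scaleR) auto
  moreover have "cone_le C (cA *\<^sub>R (x0 v* B)) ((x0 v* A) v* B)"
    using End_int_mono[OF BE] \<A>(3) A by (fastforce simp: scaleR_vector_matrix_assoc)
  moreover have "cone_le C ((x0 v* A) v* B) (KA *\<^sub>R (x0 v* B))"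
    using End_int_mono[OF BE] \<A>(3) A by (fastforce simp: scaleR_vector_matrix_assoc)
  moreover have "cone_le C (KA *\<^sub>R (x0 v* B)) (KA *\<^sub>R (KB *\<^sub>R x0))"
    using \<B>(3) B \<A>(2) by (intro cone_le_scaleR) auto
  ultimately show "cone_le C ((cA * cB) *\<^sub>R x0) ((x0 v* A) v* B) \<and> cone_le C ((x0 v* A) v* B) ((KA * KB) *\<^sub>R x0)"
    using cone_le_trans by (metis scaleR_scaleR)
qed (use x0 ne E \<A> \<B> in auto)

lemma escape_game_of_finite_nets:
  assumes x0: "x0 \<in> interior C" and ne: "\<A> \<noteq> {}" "\<B> \<noteq> {}"
    and sub: "\<A> \<subseteq> S\<^sub>A" "\<B> \<subseteq> S\<^sub>B" and E: "S\<^sub>A \<subseteq> End_int C" "S\<^sub>B \<subseteq> End_int C"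
    and F: "finite F\<^sub>A" "F\<^sub>A \<subseteq> S\<^sub>A" "finite F\<^sub>B" "F\<^sub>B \<subseteq> S\<^sub>B" and \<gamma>: "\<gamma> > 0"
    and net\<^sub>A: "\<forall>A\<in>S\<^sub>A. \<exists>A'\<in>F\<^sub>A. end_le C A' (\<gamma> *\<^sub>R A) \<and> end_le C A (\<gamma> *\<^sub>R A')"
    and net\<^sub>B: "\<forall>B\<in>S\<^sub>B. \<exists>B'\<in>F\<^sub>B. end_le C B' (\<gamma> *\<^sub>R B) \<and> end_le C B (\<gamma> *\<^sub>R B')"
  shows "\<exists>c K. escape_game C x0 \<A> \<B> c K"
proof -
  obtain cA KA where "cA > 0" "KA > 0"
    "\<forall>A\<in>\<A>. cone_le C (cA *\<^sub>R x0) (x0 v* A) \<and> cone_le C (x0 v* A) (KA *\<^sub>R x0)"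
    using bounds_of_finite_net[OF x0 F(1) _ \<gamma>, of \<A>] F(2) E(1) net\<^sub>A sub(1) by blast
  moreover obtain cB KB where "cB > 0" "KB > 0"
    "\<forall>B\<in>\<B>. cone_le C (cB *\<^sub>R x0) (x0 v* B) \<and> cone_le C (x0 v* B) (KB *\<^sub>R x0)"
    using bounds_of_finite_net[OF x0 F(3) _ \<gamma>, of \<B>] F(4) E(2) net\<^sub>B sub(2) by blast
  ultimately show ?thesis using escape_game_intro[OF x0 ne] sub E by blast
qed

lemma game_value_escape_rate:
  assumes games: "\<And>x0. x0 \<in> interior C \<Longrightarrow> \<exists>c K. escape_game C x0 \<A> \<B> c K" and x1: "x1 \<in> interior C"
  shows "\<forall>x0\<in>interior C. is_game_value C \<A> \<B> x0 (escape_rate C \<A> \<B> x1)"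
proof
  fix x0 assume x0: "x0 \<in> interior C"
  obtain c K c1 K1 where "escape_game C x0 \<A> \<B> c K" "escape_game C x1 \<A> \<B> c1 K1"
    using games[OF x0] games[OF x1] by blast
  then show "is_game_value C \<A> \<B> x0 (escape_rate C \<A> \<B> x1)"
    using escape_game.game_value escape_rate_base_independent by metis
qed

lemma escape_rate_approx:
  assumes G: "escape_game C x0 \<A> \<B> c K" and Gf: "escape_game C x0 \<A>f \<B>f cf Kf"
    and sub: "\<A>f \<subseteq> \<A>" "\<B>f \<subseteq> \<B>"
    and net\<^sub>A: "\<forall>A\<in>\<A>. \<exists>A'\<in>\<A>f. end_le C A' (exp h *\<^sub>R A)"
    and net\<^sub>B: "\<forall>B\<in>\<B>. \<exists>B'\<in>\<B>f. end_le C B (exp h *\<^sub>R B')"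
  shows "\<bar>escape_rate C \<A> \<B> x0 - escape_rate C \<A>f \<B>f x0\<bar> \<le> h"
proof -
  have refl: "end_le C A (1 *\<^sub>R A)" for A by (simp add: end_le_def cone_le_refl)
  have "escape_rate C \<A>f \<B>f x0 \<le> escape_rate C \<A> \<B> x0 + ln (exp h * 1)"
    using net\<^sub>A sub(2) refl by (intro escape_rate_le_of_dominated[OF Gf G]) auto
  moreover have "escape_rate C \<A> \<B> x0 \<le> escape_rate C \<A>f \<B>f x0 + ln (1 * exp h)"
    using net\<^sub>B sub(1) refl by (intro escape_rate_le_of_dominated[OF G Gf]) auto
  ultimately show ?thesis by simp
qed

end

theorem corollary3:
  fixes C :: "(real ^ 'n) set" and \<A> \<B> :: "'n mat set"
  assumes "closed C" "convex C" "pointed_cone C"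
    and "\<A> \<noteq> {}" "\<B> \<noteq> {}"
    and "in_same_part C (\<A> \<union> \<B>)"
    and "thompson_compact C \<A>" "thompson_compact C \<B>"
    and "h > 0"
  shows "\<exists>\<A>f \<B>f. finite \<A>f \<and> \<A>f \<noteq> {} \<and> \<A>f \<subseteq> \<A> \<and> finite \<B>f \<and> \<B>f \<noteq> {} \<and> \<B>f \<subseteq> \<B> \<and>
           (\<exists>\<rho> \<rho>f. (\<forall>x0 \<in> interior C. is_game_value C \<A> \<B> x0 \<rho> \<and> is_game_value C \<A>f \<B>f x0 \<rho>f)
                  \<and> \<bar>\<rho> - \<rho>f\<bar> \<le> h)"
proof (cases "interior C = {}")
  case True
  obtain A0 B0 where "A0 \<in> \<A>" "B0 \<in> \<B>" using assms(4,5) by blast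
  then show ?thesis using True assms(9)
    by (intro exI[of _ "{A0}"] exI[of _ "{B0}"] conjI exI[of _ 0]) auto
next
  case False
  interpret proper_cone C using assms(1-3) False by unfold_locales
  have part: "in_same_part C \<A>" "in_same_part C \<B>" using assms(6) by (auto simp: in_same_part_def)
  then have End: "\<A> \<subseteq> End_int C" "\<B> \<subseteq> End_int C" by (auto simp: in_same_part_def)
  obtain \<A>f where \<A>f: "finite \<A>f" "\<A>f \<subseteq> \<A>"
    and net\<^sub>A: "\<forall>A\<in>\<A>. \<exists>A'\<in>\<A>f. end_le C A' (exp h *\<^sub>R A) \<and> end_le C A (exp h *\<^sub>R A')"
    using thompson_compact_finite_net[OF part(1) assms(7,9)] by blast
  obtain \<B>f where \<B>f: "finite \<B>f" "\<B>f \<subseteq> \<B>"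
    and net\<^sub>B: "\<forall>B\<in>\<B>. \<exists>B'\<in>\<B>f. end_le C B' (exp h *\<^sub>R B) \<and> end_le C B (exp h *\<^sub>R B')"
    using thompson_compact_finite_net[OF part(2) assms(8,9)] by blast
  have ne: "\<A>f \<noteq> {}" "\<B>f \<noteq> {}" using net\<^sub>A net\<^sub>B assms(4,5) by blast+
  have games: "\<exists>c K. escape_game C x0 \<A> \<B> c K" "\<exists>c K. escape_game C x0 \<A>f \<B>f c K"
    if "x0 \<in> interior C" for x0
    using escape_game_of_finite_nets[OF that _ _ _ _ End \<A>f(1,2) \<B>f(1,2) exp_gt_zero net\<^sub>A net\<^sub>B]
      assms(4,5) ne \<A>f(2) \<B>f(2) by blast+
  obtain x1 where x1: "x1 \<in> interior C" using False by blast
  then obtain c K cf Kf where G: "escape_game C x1 \<A> \<B> c K" and Gf: "escape_game C x1 \<A>f \<B>f cf Kf"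
    using games by blast
  have "\<bar>escape_rate C \<A> \<B> x1 - escape_rate C \<A>f \<B>f x1\<bar> \<le> h"
    using net\<^sub>A net\<^sub>B by (intro escape_rate_approx[OF G Gf \<A>f(2) \<B>f(2)]) blast+
  then show ?thesis
    using \<A>f \<B>f ne game_value_escape_rate[OF games(1) x1] game_value_escape_rate[OF games(2) x1]
    by (intro exI[of _ \<A>f] exI[of _ \<B>f] conjI exI[of _ "escape_rate C \<A> \<B> x1"]
        exI[of _ "escape_rate C \<A>f \<B>f x1"]) auto
qed

end
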